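(* Let $\widehat M$ be a cooperative Markov game with underlying MMDP $M$, let $(S_{target},S_{avoid})$ be a reach-avoid objective, and let $\pi=(\pi_{comm},\pi_{act})\in\Pi^{pos}_{comm}(\mathcal O,K)\times\Pi^{pos}_{act}(M)$. Assume $\sum_{t\ge1}H_t<\infty$. Then $$\mathbb P_{M_{\pi_{act}}}\big((\neg S_{avoid})\,\mathcal U\,S_{target}\big)-\mathbb P_{\widehat M_{\pi}}\big((\neg S_{avoid})\,\mathcal U\,S_{target}\big)\;\le\;\sqrt{1-\exp\big(-D_{(\pi_{comm},\pi_{act})}\big)} ,$$ where the right-hand side is read as $1$ if $D_{(\pi_{comm},\pi_{act})}=+\infty$.
   Context: MMDP: there are $N\ge1$ agents, identified with $[N]=\{1,\dots,N\}$. Agent $i$ has a finite local state set $\mathcal S^i$, finite local action set $\mathcal A^i$, local transition function $P^i:\mathcal S^i\times\mathcal A^i\to\Delta(\mathcal S^i)$ and initial local state $s^i_{init}$. Joint states $\mathcal S=\prod_i\mathcal S^i$, joint actions $\mathcal A=\prod_i\mathcal A^i$, joint transitions $P(s,a)(u)=\prod_{i}P^i(s^i,a^i)(u^i)$, initial state $s_{init}=(s^1_{init},\dots,s^N_{init})$. A positional joint action policy is a map $\pi_{act}:\mathcal S\to\Delta(\mathcal A)$; $\Pi^{pos}_{act}(M)$ is the set of these. Cooperative Markov game $\widehat M=(M,\mathcal O^1,\dots,\mathcal O^N,\mathcal L^1,\dots,\mathcal L^N,K)$: each $\mathcal S^i=\mathcal O^i\times\mathcal L^i$ (public part $o^i$,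 local part $l^i$); $\mathcal O=\prod_i\mathcal O^i$, $\mathcal L=\prod_i\mathcal L^i$, and a joint state is written $s=(o,l)$. For $c\subseteq[N]$, $\mathcal O^c=\prod_{j\in c}\mathcal O^j$, $\mathcal L^c=\prod_{j\in c}\mathcal L^j$, $\mathcal A^c=\prod_{j\in c}\mathcal A^j$, and $o^c,l^c,a^c$ denote restrictions to coordinates in $c$. $K\in\{0,\dots,N\}$ and $\mathcal A_{comm}$ is the set of subsets of $[N]$ of size $K$ (so $\mathcal A_{comm}=\{\emptyset\}$ if $K=0$). A positional communication policy is a map $\pi_{comm}:\mathcal O\to\Delta(\mathcal A_{comm})$; $\Pi^{pos}_{comm}(\mathcal O,K)$ is the set of these. Reach-avoid objective: disjoint sets $S_{target},S_{avoid}\subseteq\mathcal S$; put $\mathcal T=S_{target}\cup S_{avoid}$. Full-communication process $M_{\pi_{act}}$: random sequence $S_0=s_{init},A_1,S_1,A_2,S_2,\dots$ with $\mathbb P(A_t=a,S_t=s'\mid S_0,A_1,\dots,S_{t-1}=s)=\pi_{act}(s)(a)P(s,a)(s')$. Write $S_t=(O_t,L_t)$ and $A^c_t,O^c_t,L^c_t$ (resp. $A^i_t,O^i_t,L^i_t$) for components in $c$ (resp. $i$). The process is regarded as stopped upon entering $\mathcal T$: with $E_{t}=\{S_0,\dots,S_{t}\notin\mathcal T\}$, every probability of an event concerning times $t-1,t$ is the probability of that event intersected with $E_{t-1}$, and conditional probabilities condition on the conditioning event intersected with $E_{t-1}$. For $c\subseteq[N]$ and $t\ge1$ let $q^c_t(a^c,o^c_1,l^c_1\mid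 o,l^c)=\mathbb P(A^c_t=a^c,O^c_t=o^c_1,L^c_t=l^c_1\mid O_{t-1}=o,L^c_{t-1}=l^c,E_{t-1})$ (write $q^i_t$ for $c=\{i\}$; arbitrary if the conditioning event has probability $0$). Restricted-communication process $\widehat M_\pi$, $\pi=(\pi_{comm},\pi_{act})$: random sequence $\hat S_0=s_{init},\hat A_1,\hat S_1,\dots$ (stopped upon entering $\mathcal T$) such that for any history ending in $\hat S_{t-1}=(o,l)\notin\mathcal T$, $\mathbb P(\hat A_t=a,\hat S_t=(o_1,l_1)\mid\text{history})=\sum_{c\in\mathcal A_{comm}}\pi_{comm}(o)(c)\,q^c_t(a^c,o^c_1,l^c_1\mid o,l^c)\prod_{i\notin c}q^i_t(a^i,o^i_1,l^i_1\mid o,l^i)$ (the factor for $c=\emptyset$ is $1$). $\mathbb P_{X}((\neg S_{avoid})\mathcal U S_{target})$ for a process $X$ is the probability that some state at time $t$ lies in $S_{target}$ while no state at times $<t$ lies in $S_{avoid}$. Cost: $H_t=H(A_tS_t\mid S_0A_1S_1\dots A_{t-1}S_{t-1})$ is the conditional entropy of the (stopped) full-communication process, i.e. $-\sum_{h}\mathbb P(h\cap E_{t-1})\sum_{a,s'}p_h(a,s')\log p_h(a,s')$ over histories $h$ of length $t-1$, with $p_h$ the conditional law of $(A_t,S_t)$ given $h$. With $w'(o,i)=\sum_{c\in\mathcal A_{comm},\,i\notin c}\pi_{comm}(o)(c)$ and $w''(o,c)=\pi_{comm}(o)(c)$: $G^i=\sum_{t\ge1}\sum_{o\in\mathcal O,l^i\in\mathcal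 L^i}w'(o,i)\,\mathbb P(O_{t-1}=o,L^i_{t-1}=l^i,E_{t-1})\Big(-\sum_{a^i,o^i_1,l^i_1}q^i_t\log q^i_t\Big)$, where $q^i_t=q^i_t(a^i,o^i_1,l^i_1\mid o,l^i)$; $G^c=\sum_{t\ge1}\sum_{o\in\mathcal O,l^c\in\mathcal L^c}w''(o,c)\,\mathbb P(O_{t-1}=o,L^c_{t-1}=l^c,E_{t-1})\Big(-\sum_{a^c,o^c_1,l^c_1}q^c_t\log q^c_t\Big)$; $D_{(\pi_{comm},\pi_{act})}=\sum_{i\in[N]}G^i+\sum_{c\in\mathcal A_{comm}}G^c-\sum_{t\ge1}H_t$. Convention $0\log0=0$. *)

theory Defs
  imports "HOL-Probability.Probability"
begin

text \<open>Agent i has local state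
  set pubS i \<times> locS i (public part o^i, local part l^i), action set acts i,
  local transition function trans i and initial local state (init_o i, init_l i).\<close>

record ('i, 'o, 'l, 'a) cmg =
  agents :: "'i set"
  pubS :: "'i \<Rightarrow> 'o set"
  locS :: "'i \<Rightarrow> 'l set"
  acts :: "'i \<Rightarrow> 'a set"
  trans :: "'i \<Rightarrow> 'o \<times> 'l \<Rightarrow> 'a \<Rightarrow> ('o \<times> 'l) pmf"
  init_o :: "'i \<Rightarrow> 'o"
  init_l :: "'i \<Rightarrow> 'l"
  comm_size :: nat

type_synonym ('i, 'o, 'l) jstate = "('i \<Rightarrow> 'o) \<times> ('i \<Rightarrow> 'l)"
type_synonym ('i, 'o, 'l, 'a) hist = "(('i \<Rightarrow> 'a) \<times> ('i, 'o, 'l) jstate) list"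

definition cmg_wf :: "('i, 'o, 'l, 'a) cmg \<Rightarrow> bool" where
  "cmg_wf G \<longleftrightarrow> finite (agents G) \<and> agents G \<noteq> {} \<and>
     (\<forall>i\<in>agents G. finite (pubS G i) \<and> finite (locS G i) \<and> finite (acts G i)
        \<and> acts G i \<noteq> {} \<and> init_o G i \<in> pubS G i \<and> init_l G i \<in> locS G i
        \<and> (\<forall>ol\<in>pubS G i \<times> locS G i. \<forall>a\<in>acts G i.
               set_pmf (trans G i ol a) \<subseteq> pubS G i \<times> locS G i)) \<and>
     comm_size G \<le> card (agents G)"

definition pubs :: "('i, 'o, 'l, 'a) cmg \<Rightarrow> ('i \<Rightarrow> 'o) set" where
  "pubs G = PiE (agents G) (pubS G)"

definition jstates :: "('i, 'o, 'l, 'a) cmg \<Rightarrow> ('i, 'o, 'l) jstate set" where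
  "jstates G = PiE (agents G) (pubS G) \<times> PiE (agents G) (locS G)"

definition jacts :: "('i, 'o, 'l, 'a) cmg \<Rightarrow> ('i \<Rightarrow> 'a) set" where
  "jacts G = PiE (agents G) (acts G)"

definition comm_acts :: "('i, 'o, 'l, 'a) cmg \<Rightarrow> 'i set set" where
  "comm_acts G = {c. c \<subseteq> agents G \<and> card c = comm_size G}"

definition s_init :: "('i, 'o, 'l, 'a) cmg \<Rightarrow> ('i, 'o, 'l) jstate" where
  "s_init G = (restrict (init_o G) (agents G), restrict (init_l G) (agents G))"

definition jtrans :: "('i, 'o, 'l, 'a) cmg \<Rightarrow> ('i, 'o, 'l) jstate \<Rightarrow> ('i \<Rightarrow> 'a)
    \<Rightarrow> ('i, 'o, 'l) jstate \<Rightarrow> real" where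
  "jtrans G s a s' = (if s' \<in> jstates G then
      (\<Prod>i\<in>agents G. pmf (trans G i (fst s i, snd s i) (a i)) (fst s' i, snd s' i)) else 0)"

definition pos_act_policy :: "('i, 'o, 'l, 'a) cmg \<Rightarrow> (('i, 'o, 'l) jstate \<Rightarrow> ('i \<Rightarrow> 'a) pmf) \<Rightarrow> bool" where
  "pos_act_policy G pa \<longleftrightarrow> (\<forall>s\<in>jstates G. set_pmf (pa s) \<subseteq> jacts G)"

definition pos_comm_policy :: "('i, 'o, 'l, 'a) cmg \<Rightarrow> (('i \<Rightarrow> 'o) \<Rightarrow> 'i set pmf) \<Rightarrow> bool" where
  "pos_comm_policy G pc \<longleftrightarrow> (\<forall>ob\<in>pubs G. set_pmf (pc ob) \<subseteq> comm_acts G)"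

definition reach_avoid_obj :: "('i, 'o, 'l, 'a) cmg \<Rightarrow> ('i, 'o, 'l) jstate set
    \<Rightarrow> ('i, 'o, 'l) jstate set \<Rightarrow> bool" where
  "reach_avoid_obj G St Sa \<longleftrightarrow> St \<subseteq> jstates G \<and> Sa \<subseteq> jstates G \<and> St \<inter> Sa = {}"

text \<open>Histories of length n: (A_1,S_1),...,(A_n,S_n); S_0 is the initial state.\<close>
definition hists :: "('i, 'o, 'l, 'a) cmg \<Rightarrow> nat \<Rightarrow> ('i, 'o, 'l, 'a) hist set" where
  "hists G n = {h. length h = n \<and> set h \<subseteq> jacts G \<times> jstates G}"

definition last_st :: "('i, 'o, 'l) jstate \<Rightarrow> ('i, 'o, 'l, 'a) hist \<Rightarrow> ('i, 'o, 'l) jstate" where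
  "last_st s0 h = (if h = [] then s0 else snd (last h))"

text \<open>fpath G pa T s h = probability that the stopped process started in s produces
  history h; it includes the event that all states before the last one are outside T.\<close>
primrec fpath :: "('i, 'o, 'l, 'a) cmg \<Rightarrow> (('i, 'o, 'l) jstate \<Rightarrow> ('i \<Rightarrow> 'a) pmf)
    \<Rightarrow> ('i, 'o, 'l) jstate set \<Rightarrow> ('i, 'o, 'l) jstate \<Rightarrow> ('i, 'o, 'l, 'a) hist \<Rightarrow> real" where
  "fpath G pa T s [] = 1"
| "fpath G pa T s (x # h) = (if s \<in> T then 0 else
      pmf (pa s) (fst x) * jtrans G s (fst x) (snd x) * fpath G pa T (snd x) h)"

text \<open>P(h \<inter> E_n) for a history h of length n.\<close>
definition fprobE :: "('i, 'o, 'l, 'a) cmg \<Rightarrow> (('i, 'o, 'l) jstate \<Rightarrow> ('i \<Rightarrow> 'a) pmf)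
    \<Rightarrow> ('i, 'o, 'l) jstate set \<Rightarrow> ('i, 'o, 'l, 'a) hist \<Rightarrow> real" where
  "fprobE G pa T h = (if last_st (s_init G) h \<in> T then 0 else fpath G pa T (s_init G) h)"

text \<open>P(O_{t-1} = o, L^c_{t-1} = lc, E_{t-1}).\<close>
definition fmarg :: "('i, 'o, 'l, 'a) cmg \<Rightarrow> (('i, 'o, 'l) jstate \<Rightarrow> ('i \<Rightarrow> 'a) pmf)
    \<Rightarrow> ('i, 'o, 'l) jstate set \<Rightarrow> nat \<Rightarrow> 'i set \<Rightarrow> ('i \<Rightarrow> 'o) \<Rightarrow> ('i \<Rightarrow> 'l) \<Rightarrow> real" where
  "fmarg G pa T t c ob lc = (\<Sum>h\<in>hists G (t - 1).
      (if fst (last_st (s_init G) h) = ob \<and> restrict (snd (last_st (s_init G) h)) c = lc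
       then fprobE G pa T h else 0))"

text \<open>P(A^c_t = ac, O^c_t = oc1, L^c_t = lc1, O_{t-1} = o, L^c_{t-1} = lc, E_{t-1}), for t \<ge> 1.\<close>
definition fjoint :: "('i, 'o, 'l, 'a) cmg \<Rightarrow> (('i, 'o, 'l) jstate \<Rightarrow> ('i \<Rightarrow> 'a) pmf)
    \<Rightarrow> ('i, 'o, 'l) jstate set \<Rightarrow> nat \<Rightarrow> 'i set \<Rightarrow> ('i \<Rightarrow> 'o) \<Rightarrow> ('i \<Rightarrow> 'l)
    \<Rightarrow> ('i \<Rightarrow> 'a) \<times> ('i \<Rightarrow> 'o) \<times> ('i \<Rightarrow> 'l) \<Rightarrow> real" where
  "fjoint G pa T t c ob lc x = (\<Sum>h\<in>hists G t.
      (let s = last_st (s_init G) (butlast h); a = fst (last h); s1 = snd (last h) in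
       if fst s = ob \<and> restrict (snd s) c = lc \<and>
          (restrict a c, restrict (fst s1) c, restrict (snd s1) c) = x
       then fpath G pa T (s_init G) h else 0))"

text \<open>q^c_t(x | o, lc) of the full process (value 0 when the conditioning event is null;
  this value is irrelevant wherever qfull is used below).\<close>
definition qfull :: "('i, 'o, 'l, 'a) cmg \<Rightarrow> (('i, 'o, 'l) jstate \<Rightarrow> ('i \<Rightarrow> 'a) pmf)
    \<Rightarrow> ('i, 'o, 'l) jstate set \<Rightarrow> nat \<Rightarrow> 'i set \<Rightarrow> ('i \<Rightarrow> 'o) \<Rightarrow> ('i \<Rightarrow> 'l)
    \<Rightarrow> ('i \<Rightarrow> 'a) \<times> ('i \<Rightarrow> 'o) \<times> ('i \<Rightarrow> 'l) \<Rightarrow> real" where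
  "qfull G pa T t c ob lc x = fjoint G pa T t c ob lc x / fmarg G pa T t c ob lc"

definition loc_triples :: "('i, 'o, 'l, 'a) cmg \<Rightarrow> 'i set
    \<Rightarrow> (('i \<Rightarrow> 'a) \<times> ('i \<Rightarrow> 'o) \<times> ('i \<Rightarrow> 'l)) set" where
  "loc_triples G c = PiE c (acts G) \<times> PiE c (pubS G) \<times> PiE c (locS G)"

text \<open>Admissible choices of the kernels q^c_t used by the restricted process: they are
  distributions on A^c \<times> O^c \<times> L^c, equal to the conditional law of the full process
  whenever the conditioning event has positive probability, and arbitrary otherwise.\<close>
definition q_admissible :: "('i, 'o, 'l, 'a) cmg \<Rightarrow> (('i, 'o, 'l) jstate \<Rightarrow> ('i \<Rightarrow> 'a) pmf)
    \<Rightarrow> ('i, 'o, 'l) jstate set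
    \<Rightarrow> (nat \<Rightarrow> 'i set \<Rightarrow> ('i \<Rightarrow> 'o) \<Rightarrow> ('i \<Rightarrow> 'l) \<Rightarrow> (('i \<Rightarrow> 'a) \<times> ('i \<Rightarrow> 'o) \<times> ('i \<Rightarrow> 'l)) pmf)
    \<Rightarrow> bool" where
  "q_admissible G pa T q \<longleftrightarrow>
     (\<forall>t\<ge>1. \<forall>c. (c \<in> comm_acts G \<or> (\<exists>i\<in>agents G. c = {i})) \<longrightarrow>
        (\<forall>ob\<in>pubs G. \<forall>lc\<in>PiE c (locS G).
           set_pmf (q t c ob lc) \<subseteq> loc_triples G c \<and>
           (fmarg G pa T t c ob lc > 0 \<longrightarrow> (\<forall>x. pmf (q t c ob lc) x = qfull G pa T t c ob lc x))))"

definition rkernel :: "('i, 'o, 'l, 'a) cmg \<Rightarrow> (('i \<Rightarrow> 'o) \<Rightarrow> 'i set pmf)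
    \<Rightarrow> (nat \<Rightarrow> 'i set \<Rightarrow> ('i \<Rightarrow> 'o) \<Rightarrow> ('i \<Rightarrow> 'l) \<Rightarrow> (('i \<Rightarrow> 'a) \<times> ('i \<Rightarrow> 'o) \<times> ('i \<Rightarrow> 'l)) pmf)
    \<Rightarrow> nat \<Rightarrow> ('i, 'o, 'l) jstate \<Rightarrow> ('i \<Rightarrow> 'a) \<Rightarrow> ('i, 'o, 'l) jstate \<Rightarrow> real" where
  "rkernel G pc q t s a s' = (\<Sum>c\<in>comm_acts G.
      pmf (pc (fst s)) c
      * pmf (q t c (fst s) (restrict (snd s) c))
            (restrict a c, restrict (fst s') c, restrict (snd s') c)
      * (\<Prod>i\<in>agents G - c. pmf (q t {i} (fst s) (restrict (snd s) {i}))
            (restrict a {i}, restrict (fst s') {i}, restrict (snd s') {i})))"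

text \<open>rpath G pc q T t s h: probability of history h when the restricted process is in
  state s at time t-1 (stopped upon entering T).\<close>
primrec rpath :: "('i, 'o, 'l, 'a) cmg \<Rightarrow> (('i \<Rightarrow> 'o) \<Rightarrow> 'i set pmf)
    \<Rightarrow> (nat \<Rightarrow> 'i set \<Rightarrow> ('i \<Rightarrow> 'o) \<Rightarrow> ('i \<Rightarrow> 'l) \<Rightarrow> (('i \<Rightarrow> 'a) \<times> ('i \<Rightarrow> 'o) \<times> ('i \<Rightarrow> 'l)) pmf)
    \<Rightarrow> ('i, 'o, 'l) jstate set \<Rightarrow> nat \<Rightarrow> ('i, 'o, 'l) jstate \<Rightarrow> ('i, 'o, 'l, 'a) hist \<Rightarrow> real" where
  "rpath G pc q T t s [] = 1"
| "rpath G pc q T t s (x # h) = (if s \<in> T then 0 else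
      rkernel G pc q t s (fst x) (snd x) * rpath G pc q T (Suc t) (snd x) h)"

text \<open>For a process stopped upon entering T = St \<union> Sa, the event (\<not> Sa) U St is the
  disjoint union over n of: S_0..S_{n-1} \<notin> T and S_n \<in> St.  Here hp h is the
  probability of the history h of the stopped process.\<close>
definition until_prob :: "('i, 'o, 'l, 'a) cmg \<Rightarrow> (('i, 'o, 'l, 'a) hist \<Rightarrow> real)
    \<Rightarrow> ('i, 'o, 'l) jstate set \<Rightarrow> real" where
  "until_prob G hp St = (\<Sum>n. \<Sum>h\<in>hists G n.
      (if last_st (s_init G) h \<in> St then hp h else 0))"

definition xlogx :: "real \<Rightarrow> real" where
  "xlogx p = (if p = 0 then 0 else p * ln p)"

definition entropy_on :: "('x \<Rightarrow> real) \<Rightarrow> 'x set \<Rightarrow> real" where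
  "entropy_on f X = - (\<Sum>x\<in>X. xlogx (f x))"

text \<open>H_t = H(A_t S_t | S_0 A_1 ... S_{t-1}) for the stopped full process, t \<ge> 1.\<close>
definition Hent :: "('i, 'o, 'l, 'a) cmg \<Rightarrow> (('i, 'o, 'l) jstate \<Rightarrow> ('i \<Rightarrow> 'a) pmf)
    \<Rightarrow> ('i, 'o, 'l) jstate set \<Rightarrow> nat \<Rightarrow> real" where
  "Hent G pa T t = (\<Sum>h\<in>hists G (t - 1).
      fprobE G pa T h *
      entropy_on (\<lambda>x. fpath G pa T (s_init G) (h @ [x]) / fprobE G pa T h) (jacts G \<times> jstates G))"

definition wprime :: "('i, 'o, 'l, 'a) cmg \<Rightarrow> (('i \<Rightarrow> 'o) \<Rightarrow> 'i set pmf) \<Rightarrow> ('i \<Rightarrow> 'o) \<Rightarrow> 'i \<Rightarrow> real" where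
  "wprime G pc ob i = (\<Sum>c\<in>{c\<in>comm_acts G. i \<notin> c}. pmf (pc ob) c)"

definition Gi_term :: "('i, 'o, 'l, 'a) cmg \<Rightarrow> (('i \<Rightarrow> 'o) \<Rightarrow> 'i set pmf)
    \<Rightarrow> (('i, 'o, 'l) jstate \<Rightarrow> ('i \<Rightarrow> 'a) pmf) \<Rightarrow> ('i, 'o, 'l) jstate set \<Rightarrow> 'i \<Rightarrow> nat \<Rightarrow> real" where
  "Gi_term G pc pa T i t = (\<Sum>ob\<in>pubs G. \<Sum>li\<in>PiE {i} (locS G).
      wprime G pc ob i * fmarg G pa T t {i} ob li *
      entropy_on (qfull G pa T t {i} ob li) (loc_triples G {i}))"

definition Gc_term :: "('i, 'o, 'l, 'a) cmg \<Rightarrow> (('i \<Rightarrow> 'o) \<Rightarrow> 'i set pmf)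
    \<Rightarrow> (('i, 'o, 'l) jstate \<Rightarrow> ('i \<Rightarrow> 'a) pmf) \<Rightarrow> ('i, 'o, 'l) jstate set \<Rightarrow> 'i set \<Rightarrow> nat \<Rightarrow> real" where
  "Gc_term G pc pa T c t = (\<Sum>ob\<in>pubs G. \<Sum>lc\<in>PiE c (locS G).
      pmf (pc ob) c * fmarg G pa T t c ob lc *
      entropy_on (qfull G pa T t c ob lc) (loc_triples G c))"

definition Gi :: "('i, 'o, 'l, 'a) cmg \<Rightarrow> (('i \<Rightarrow> 'o) \<Rightarrow> 'i set pmf)
    \<Rightarrow> (('i, 'o, 'l) jstate \<Rightarrow> ('i \<Rightarrow> 'a) pmf) \<Rightarrow> ('i, 'o, 'l) jstate set \<Rightarrow> 'i \<Rightarrow> ennreal" where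
  "Gi G pc pa T i = (\<Sum>t. ennreal (Gi_term G pc pa T i (Suc t)))"

definition Gc :: "('i, 'o, 'l, 'a) cmg \<Rightarrow> (('i \<Rightarrow> 'o) \<Rightarrow> 'i set pmf)
    \<Rightarrow> (('i, 'o, 'l) jstate \<Rightarrow> ('i \<Rightarrow> 'a) pmf) \<Rightarrow> ('i, 'o, 'l) jstate set \<Rightarrow> 'i set \<Rightarrow> ennreal" where
  "Gc G pc pa T c = (\<Sum>t. ennreal (Gc_term G pc pa T c (Suc t)))"

definition Dcost :: "('i, 'o, 'l, 'a) cmg \<Rightarrow> (('i \<Rightarrow> 'o) \<Rightarrow> 'i set pmf)
    \<Rightarrow> (('i, 'o, 'l) jstate \<Rightarrow> ('i \<Rightarrow> 'a) pmf) \<Rightarrow> ('i, 'o, 'l) jstate set \<Rightarrow> ereal" where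
  "Dcost G pc pa T =
     enn2ereal ((\<Sum>i\<in>agents G. Gi G pc pa T i) + (\<Sum>c\<in>comm_acts G. Gc G pc pa T c))
     - ereal (\<Sum>t. Hent G pa T (Suc t))"

end

theory Submission
  imports Defs
begin

(* Truncate both stopped processes at a horizon n: they become sub-probability weights P, Q on
   histories of length at most n, and the difference of the probabilities of any event is at most
   sqrt (1 - BC^2), BC being the Bhattacharyya coefficient sum sqrt (P h * Q h).
   On every step the full process can take, the restricted kernel dominates p * exp (- g), where
   g is the log-ratio of the full kernel p to the geometric mean, weighted by the communication
   policy, of the factored kernels q (Jensen for exp).  By induction on n this gives
   BC >= exp (- K_n / 2), K_n the expected cumulated g.  Taking conditional expectations step by
   step, K_n is the n-th partial sum of sum_i G^i + sum_c G^c - sum_t H_t, and n -> infinity yields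
   the bound with D. *)

section \<open>Stopped processes driven by a time-dependent kernel\<close>

primrec path_weight :: "(nat \<Rightarrow> 's \<Rightarrow> 'b \<times> 's \<Rightarrow> real) \<Rightarrow> 's set \<Rightarrow> nat \<Rightarrow> 's
    \<Rightarrow> ('b \<times> 's) list \<Rightarrow> real" where
  "path_weight k T t s [] = 1"
| "path_weight k T t s (x # h) =
     (if s \<in> T then 0 else k t s x * path_weight k T (Suc t) (snd x) h)"

definition final_state :: "'s \<Rightarrow> ('b \<times> 's) list \<Rightarrow> 's" where
  "final_state s h = (if h = [] then s else snd (last h))"

lemma final_state_Nil [simp]: "final_state s [] = s"
  by (simp add: final_state_def)

lemma final_state_Cons [simp]: "final_state s (x # h) = final_state (snd x) h"
  by (simp add: final_state_def)

lemma final_state_snoc [simp]: "final_state s (h @ [x]) = snd x"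
  by (simp add: final_state_def)

lemma path_weight_nonneg: "(\<And>t s x. k t s x \<ge> 0) \<Longrightarrow> path_weight k T t s h \<ge> 0"
  by (induction h arbitrary: t s) auto

lemma path_weight_snoc:
  "path_weight k T t s (h @ [x]) = path_weight k T t s h *
     (if final_state s h \<in> T then 0 else k (t + length h) (final_state s h) x)"
  by (induction h arbitrary: t s) (auto simp: final_state_def)

definition lists_of_len :: "'x set \<Rightarrow> nat \<Rightarrow> 'x list set" where
  "lists_of_len X n = {h. length h = n \<and> set h \<subseteq> X}"

definition lists_upto :: "'x set \<Rightarrow> nat \<Rightarrow> 'x list set" where
  "lists_upto X n = {h. length h \<le> n \<and> set h \<subseteq> X}"

lemma finite_lists_of_len: "finite X \<Longrightarrow> finite (lists_of_len X n)"
  unfolding lists_of_len_def using finite_lists_length_eq[of X n] by (simp add: conj_commute)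

lemma finite_lists_upto: "finite X \<Longrightarrow> finite (lists_upto X n)"
  unfolding lists_upto_def using finite_lists_length_le[of X n] by (simp add: conj_commute)

lemma lists_of_len_0 [simp]: "lists_of_len X 0 = {[]}"
  by (auto simp: lists_of_len_def)

lemma lists_upto_0 [simp]: "lists_upto X 0 = {[]}"
  by (auto simp: lists_upto_def)

lemma lists_upto_eq_UN: "lists_upto X n = (\<Union>k<Suc n. lists_of_len X k)"
  by (auto simp: lists_upto_def lists_of_len_def)

lemma sum_lists_of_len_Suc:
  assumes "finite X"
  shows "(\<Sum>h\<in>lists_of_len X (Suc n). f h) = (\<Sum>x\<in>X. \<Sum>h\<in>lists_of_len X n. f (x # h))"
proof -
  have "lists_of_len X (Suc n) = (\<lambda>(x, h). x # h) ` (X \<times> lists_of_len X n)"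
    by (auto simp: lists_of_len_def length_Suc_conv image_iff)
  moreover have "inj_on (\<lambda>(x, h). x # h) (X \<times> lists_of_len X n)"
    by (auto simp: inj_on_def)
  ultimately show ?thesis
    by (simp only: sum.reindex) (simp add: sum.cartesian_product case_prod_beta)
qed

lemma sum_lists_of_len_Suc_snoc:
  assumes "finite X"
  shows "(\<Sum>h\<in>lists_of_len X (Suc n). f h) = (\<Sum>h\<in>lists_of_len X n. \<Sum>x\<in>X. f (h @ [x]))"
proof -
  have "lists_of_len X (Suc n) = (\<lambda>(h, x). h @ [x]) ` (lists_of_len X n \<times> X)"
  proof (intro equalityI subsetI)
    fix h assume "h \<in> lists_of_len X (Suc n)"
    then show "h \<in> (\<lambda>(h, x). h @ [x]) ` (lists_of_len X n \<times> X)"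
      by (cases h rule: rev_cases) (auto simp: lists_of_len_def image_iff)
  qed (auto simp: lists_of_len_def)
  moreover have "inj_on (\<lambda>(h, x). h @ [x]) (lists_of_len X n \<times> X)"
    by (auto simp: inj_on_def)
  ultimately show ?thesis
    by (simp only: sum.reindex) (simp add: sum.cartesian_product case_prod_beta)
qed

lemma sum_lists_upto_Suc:
  assumes fin: "finite X"
  shows "(\<Sum>h\<in>lists_upto X (Suc n). f h) = f [] + (\<Sum>x\<in>X. \<Sum>h\<in>lists_upto X n. f (x # h))"
proof -
  let ?C = "(\<lambda>(x, h). x # h) ` (X \<times> lists_upto X n)"
  have eq: "lists_upto X (Suc n) = insert [] ?C"
  proof (intro equalityI subsetI)
    fix h assume "h \<in> lists_upto X (Suc n)"
    then show "h \<in> insert [] ?C"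
      by (cases h) (auto simp: lists_upto_def image_iff)
  qed (auto simp: lists_upto_def)
  have "finite ?C"
    using fin finite_lists_upto by blast
  then have "(\<Sum>h\<in>lists_upto X (Suc n). f h) = f [] + (\<Sum>h\<in>?C. f h)"
    unfolding eq by (subst sum.insert) auto
  also have "(\<Sum>h\<in>?C. f h) = (\<Sum>(x, h)\<in>X \<times> lists_upto X n. f (x # h))"
    by (subst sum.reindex) (auto simp: inj_on_def case_prod_beta)
  finally show ?thesis
    by (simp add: sum.cartesian_product)
qed

definition stopped_weight :: "(nat \<Rightarrow> 's \<Rightarrow> 'b \<times> 's \<Rightarrow> real) \<Rightarrow> 's set \<Rightarrow> nat \<Rightarrow> nat \<Rightarrow> 's
    \<Rightarrow> ('b \<times> 's) list \<Rightarrow> real" where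
  "stopped_weight k T n t s h =
     (if length h = n \<or> final_state s h \<in> T then path_weight k T t s h else 0)"

lemma stopped_weight_0_Nil [simp]: "stopped_weight k T 0 t s [] = 1"
  by (simp add: stopped_weight_def)

lemma stopped_weight_Suc_Nil [simp]: "stopped_weight k T (Suc n) t s [] = (if s \<in> T then 1 else 0)"
  by (simp add: stopped_weight_def)

lemma stopped_weight_Suc_Cons [simp]:
  "stopped_weight k T (Suc n) t s (x # h) =
     (if s \<in> T then 0 else k t s x * stopped_weight k T n (Suc t) (snd x) h)"
  by (simp add: stopped_weight_def)

lemma stopped_weight_nonneg: "(\<And>t s x. k t s x \<ge> 0) \<Longrightarrow> stopped_weight k T n t s h \<ge> 0"
  by (simp add: stopped_weight_def path_weight_nonneg)

lemma sum_stopped_weight_le_1: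
  assumes fin: "finite X" and nonneg: "\<And>t s x. k t s x \<ge> 0"
    and X_S: "\<And>x. x \<in> X \<Longrightarrow> snd x \<in> S"
    and sum_le: "\<And>t s. s \<in> S \<Longrightarrow> s \<notin> T \<Longrightarrow> (\<Sum>x\<in>X. k t s x) \<le> 1"
    and "s \<in> S"
  shows "(\<Sum>h\<in>lists_upto X n. stopped_weight k T n t s h) \<le> 1"
  using \<open>s \<in> S\<close>
proof (induction n arbitrary: t s)
  case (Suc n)
  show ?case
  proof (cases "s \<in> T")
    case False
    have "(\<Sum>x\<in>X. \<Sum>h\<in>lists_upto X n. k t s x * stopped_weight k T n (Suc t) (snd x) h)
        = (\<Sum>x\<in>X. k t s x * (\<Sum>h\<in>lists_upto X n. stopped_weight k T n (Suc t) (snd x) h))"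
      by (simp add: sum_distrib_left)
    also have "\<dots> \<le> (\<Sum>x\<in>X. k t s x * 1)"
      by (intro sum_mono mult_left_mono Suc.IH X_S nonneg)
    also have "\<dots> \<le> 1"
      using sum_le[OF Suc.prems False] by simp
    finally show ?thesis
      using False by (simp add: sum_lists_upto_Suc[OF fin])
  qed (simp add: sum_lists_upto_Suc[OF fin])
qed simp

lemma sum_event_stopped_weight:
  assumes "finite X" and "St \<subseteq> T"
  shows "(\<Sum>k<Suc n. \<Sum>h\<in>lists_of_len X k. if final_state s h \<in> St then path_weight p T t s h else 0)
       = (\<Sum>h\<in>lists_upto X n. if final_state s h \<in> St then stopped_weight p T n t s h else 0)"
proof -
  have "(\<Sum>h\<in>lists_upto X n. if final_state s h \<in> St then stopped_weight p T n t s h else 0)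
      = (\<Sum>k<Suc n. \<Sum>h\<in>lists_of_len X k. if final_state s h \<in> St then stopped_weight p T n t s h else 0)"
    unfolding lists_upto_eq_UN using finite_lists_of_len[OF \<open>finite X\<close>]
    by (subst sum.UNION_disjoint) (auto simp: lists_of_len_def)
  also have "\<dots> = (\<Sum>k<Suc n. \<Sum>h\<in>lists_of_len X k. if final_state s h \<in> St then path_weight p T t s h else 0)"
    using \<open>St \<subseteq> T\<close> by (intro sum.cong refl) (auto simp: stopped_weight_def)
  finally show ?thesis by simp
qed

lemma sum_event_path_weight_le_1:
  assumes fin: "finite X" and nonneg: "\<And>t s x. k t s x \<ge> 0"
    and X_S: "\<And>x. x \<in> X \<Longrightarrow> snd x \<in> S"
    and sum_le: "\<And>t s. s \<in> S \<Longrightarrow> s \<notin> T \<Longrightarrow> (\<Sum>x\<in>X. k t s x) \<le> 1"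
    and "s \<in> S" and "St \<subseteq> T"
  shows "(\<Sum>j<n. \<Sum>h\<in>lists_of_len X j. if final_state s h \<in> St then path_weight k T t s h else 0) \<le> 1"
proof (cases n)
  case (Suc m)
  have "(\<Sum>h\<in>lists_upto X m. if final_state s h \<in> St then stopped_weight k T m t s h else 0)
      \<le> (\<Sum>h\<in>lists_upto X m. stopped_weight k T m t s h)"
    by (intro sum_mono) (simp add: stopped_weight_nonneg nonneg)
  also have "\<dots> \<le> 1"
    by (rule sum_stopped_weight_le_1[OF fin nonneg X_S sum_le \<open>s \<in> S\<close>])
  finally show ?thesis
    using Suc sum_event_stopped_weight[OF fin \<open>St \<subseteq> T\<close>] by simp
qed simp

definition surviving_weight :: "(nat \<Rightarrow> 's \<Rightarrow> 'b \<times> 's \<Rightarrow> real) \<Rightarrow> 's set \<Rightarrow> nat \<Rightarrow> 's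
    \<Rightarrow> ('b \<times> 's) list \<Rightarrow> real" where
  "surviving_weight k T t s h = (if final_state s h \<in> T then 0 else path_weight k T t s h)"

lemma surviving_weight_Nil [simp]: "surviving_weight k T t s [] = (if s \<in> T then 0 else 1)"
  by (simp add: surviving_weight_def)

lemma surviving_weight_Cons [simp]:
  "surviving_weight k T t s (x # h) =
     (if s \<in> T then 0 else k t s x * surviving_weight k T (Suc t) (snd x) h)"
  by (simp add: surviving_weight_def)

section \<open>The Bhattacharyya bound for a cost-dominated pair of processes\<close>

lemma event_diff_le_bhattacharyya:
  assumes fin: "finite H" and P: "\<And>h. h \<in> H \<Longrightarrow> P h \<ge> 0" and Q: "\<And>h. h \<in> H \<Longrightarrow> Q h \<ge> 0"
    and P1: "(\<Sum>h\<in>H. P h) \<le> 1" and Q1: "(\<Sum>h\<in>H. Q h) \<le> 1"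
  shows "(\<Sum>h\<in>H. if A h then P h else 0) - (\<Sum>h\<in>H. if A h then Q h else 0)
      \<le> sqrt (1 - (\<Sum>h\<in>H. sqrt (P h * Q h))\<^sup>2)"
proof -
  \<comment> \<open>Cauchy-Schwarz bounds B^2 by m M \<le> m (2 - m); the event difference is at most 1 - m.\<close>
  define m where "m = (\<Sum>h\<in>H. min (P h) (Q h))"
  define M where "M = (\<Sum>h\<in>H. max (P h) (Q h))"
  define B where "B = (\<Sum>h\<in>H. sqrt (P h * Q h))"
  have m_plus_M: "m + M = (\<Sum>h\<in>H. P h) + (\<Sum>h\<in>H. Q h)"
    unfolding m_def M_def sum.distrib[symmetric] by (intro sum.cong) auto
  have "m \<ge> 0"
    unfolding m_def using P Q by (intro sum_nonneg) auto
  have m_le: "m \<le> (\<Sum>h\<in>H. P h)"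
    unfolding m_def by (intro sum_mono) auto
  have "B = (\<Sum>h\<in>H. sqrt (min (P h) (Q h)) * sqrt (max (P h) (Q h)))"
    unfolding B_def real_sqrt_mult[symmetric]
    by (intro sum.cong refl) (auto simp: min_def max_def mult.commute)
  then have "B\<^sup>2 \<le> (\<Sum>h\<in>H. (sqrt (min (P h) (Q h)))\<^sup>2) * (\<Sum>h\<in>H. (sqrt (max (P h) (Q h)))\<^sup>2)"
    using Cauchy_Schwarz_ineq_sum by metis
  also have "\<dots> = m * M"
    unfolding m_def M_def using P Q
    by (intro arg_cong2[where f = "(*)"] sum.cong) (auto simp: min_def max_def)
  also have "\<dots> \<le> m * (2 - m)"
    using m_plus_M P1 Q1 \<open>m \<ge> 0\<close> by (intro mult_left_mono) auto
  finally have BC: "(1 - m)\<^sup>2 \<le> 1 - B\<^sup>2"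
    by (simp add: power2_eq_square algebra_simps)
  have "(\<Sum>h\<in>H. if A h then P h else 0) - (\<Sum>h\<in>H. if A h then Q h else 0)
      = (\<Sum>h\<in>H. if A h then P h - Q h else 0)"
    by (simp add: sum_subtractf[symmetric] if_distrib cong: if_cong)
  also have "\<dots> \<le> (\<Sum>h\<in>H. P h - min (P h) (Q h))"
    using P Q by (intro sum_mono) auto
  also have "\<dots> = (\<Sum>h\<in>H. P h) - m"
    by (simp add: m_def sum_subtractf)
  also have "\<dots> \<le> 1 - m"
    using P1 by simp
  also have "\<dots> \<le> sqrt (1 - B\<^sup>2)"
    using BC m_le P1 by (intro real_le_rsqrt) auto
  finally show ?thesis
    by (simp add: B_def)
qed

lemma exp_sum_le_sum_exp:
  fixes w y :: "'x \<Rightarrow> real"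
  assumes "finite A" "\<And>x. x \<in> A \<Longrightarrow> w x \<ge> 0" "(\<Sum>x\<in>A. w x) = 1"
  shows "exp (\<Sum>x\<in>A. w x * y x) \<le> (\<Sum>x\<in>A. w x * exp (y x))"
proof -
  have "A \<noteq> {}"
    using assms(3) by auto
  then show ?thesis
    using convex_on_sum[where S = A and a = w and y = y and f = exp and C = UNIV] assms exp_convex by simp
qed

lemma mult_exp_half_le_sqrt:
  fixes p g r :: real
  assumes "p \<ge> 0" "p * exp (- g) \<le> r"
  shows "p * exp (- g / 2) \<le> sqrt (p * r)"
proof -
  have "(p * exp (- g / 2))\<^sup>2 = p * (p * exp (- g))"
    by (simp add: power2_eq_square exp_add[symmetric] algebra_simps)
  also have "\<dots> \<le> p * r"
    using assms by (intro mult_left_mono) auto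
  finally show ?thesis
    using assms(1) by (intro real_le_rsqrt) auto
qed

fun expected_cost :: "(nat \<Rightarrow> 's \<Rightarrow> 'b \<times> 's \<Rightarrow> real) \<Rightarrow> (nat \<Rightarrow> 's \<Rightarrow> 'b \<times> 's \<Rightarrow> real) \<Rightarrow> 's set
    \<Rightarrow> ('b \<times> 's) set \<Rightarrow> nat \<Rightarrow> nat \<Rightarrow> 's \<Rightarrow> real" where
  "expected_cost p g T X 0 t s = 0"
| "expected_cost p g T X (Suc n) t s = (if s \<in> T then 0 else
     (\<Sum>x\<in>X. p t s x * (g t s x + expected_cost p g T X n (Suc t) (snd x))))"

lemma expected_cost_eq_sum:
  assumes fin: "finite X"
  shows "expected_cost p g T X n t s = (\<Sum>k<n. \<Sum>h\<in>lists_of_len X k. surviving_weight p T t s h *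
      (\<Sum>x\<in>X. p (t + k) (final_state s h) x * g (t + k) (final_state s h) x))"
proof (induction n arbitrary: t s)
  case (Suc n)
  let ?E = "\<lambda>t s k. \<Sum>h\<in>lists_of_len X k. surviving_weight p T t s h *
      (\<Sum>x\<in>X. p (t + k) (final_state s h) x * g (t + k) (final_state s h) x)"
  have "(\<Sum>k<Suc n. ?E t s k) = ?E t s 0 + (\<Sum>k<n. ?E t s (Suc k))"
    by (rule sum.lessThan_Suc_shift)
  also have "?E t s 0 = (if s \<in> T then 0 else (\<Sum>x\<in>X. p t s x * g t s x))"
    by simp
  also have "(\<Sum>k<n. ?E t s (Suc k))
      = (\<Sum>k<n. \<Sum>x\<in>X. if s \<in> T then 0 else p t s x * ?E (Suc t) (snd x) k)"
    by (cases "s \<in> T") (simp_all add: sum_lists_of_len_Suc[OF fin] sum_distrib_left mult.assoc)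
  also have "\<dots> = (if s \<in> T then 0 else (\<Sum>x\<in>X. p t s x * expected_cost p g T X n (Suc t) (snd x)))"
    by (simp add: Suc.IH sum_distrib_left sum.swap[of _ "{..<n}"])
  finally show ?case
    by (simp add: sum.distrib algebra_simps)
qed simp

lemma exp_neg_half_expected_cost_le_bhattacharyya:
  assumes fin: "finite X" and p_nonneg: "\<And>t s x. p t s x \<ge> 0" and r_nonneg: "\<And>t s x. r t s x \<ge> 0"
    and X_S: "\<And>x. x \<in> X \<Longrightarrow> snd x \<in> S"
    and p_sum: "\<And>t s. s \<in> S \<Longrightarrow> s \<notin> T \<Longrightarrow> (\<Sum>x\<in>X. p t s x) = 1"
    and good_S: "\<And>t s. good t s \<Longrightarrow> s \<in> S"
    and step: "\<And>t s x. good t s \<Longrightarrow> s \<notin> T \<Longrightarrow> x \<in> X \<Longrightarrow> p t s x > 0 \<Longrightarrow>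
        (snd x \<in> T \<or> good (Suc t) (snd x)) \<and> p t s x * exp (- g t s x) \<le> r t s x"
    and start: "s \<in> T \<or> good t s"
  shows "exp (- expected_cost p g T X n t s / 2)
    \<le> (\<Sum>h\<in>lists_upto X n. sqrt (stopped_weight p T n t s h * stopped_weight r T n t s h))"
  using start
proof (induction n arbitrary: t s)
  case (Suc n)
  show ?case
  proof (cases "s \<in> T")
    case False
    then have "good t s"
      using Suc.prems by auto
    let ?K = "\<lambda>x. expected_cost p g T X n (Suc t) (snd x)"
    let ?B = "\<lambda>x. \<Sum>h\<in>lists_upto X n.
      sqrt (stopped_weight p T n (Suc t) (snd x) h * stopped_weight r T n (Suc t) (snd x) h)"
    have "(\<Sum>x\<in>X. p t s x * (- (g t s x + ?K x) / 2))
        = - (\<Sum>x\<in>X. p t s x * (g t s x + ?K x)) / 2"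
      unfolding sum_negf[symmetric] sum_divide_distrib by (intro sum.cong refl) (simp add: algebra_simps)
    then have "exp (- expected_cost p g T X (Suc n) t s / 2)
        = exp (\<Sum>x\<in>X. p t s x * (- (g t s x + ?K x) / 2))"
      using False by simp
    also have "\<dots> \<le> (\<Sum>x\<in>X. p t s x * exp (- (g t s x + ?K x) / 2))"
      using p_nonneg p_sum[OF good_S[OF \<open>good t s\<close>] False]
      by (intro exp_sum_le_sum_exp[OF fin]) auto
    also have "\<dots> \<le> (\<Sum>x\<in>X. sqrt (p t s x * r t s x) * ?B x)"
    proof (intro sum_mono)
      fix x assume "x \<in> X"
      show "p t s x * exp (- (g t s x + ?K x) / 2) \<le> sqrt (p t s x * r t s x) * ?B x"
      proof (cases "p t s x = 0")
        case False
        then have "p t s x > 0"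
          using p_nonneg[of t s x] by auto
        note step' = step[OF \<open>good t s\<close> \<open>s \<notin> T\<close> \<open>x \<in> X\<close> this]
        have "p t s x * exp (- (g t s x + ?K x) / 2) = p t s x * exp (- g t s x / 2) * exp (- ?K x / 2)"
          by (simp add: exp_add[symmetric] field_simps)
        also have "\<dots> \<le> sqrt (p t s x * r t s x) * ?B x"
          using step' p_nonneg r_nonneg Suc.IH[of "snd x" "Suc t"]
          by (intro mult_mono mult_exp_half_le_sqrt) auto
        finally show ?thesis .
      qed simp
    qed
    also have "\<dots> = (\<Sum>h\<in>lists_upto X (Suc n). sqrt (stopped_weight p T (Suc n) t s h * stopped_weight r T (Suc n) t s h))"
      using False by (simp add: sum_lists_upto_Suc[OF fin] sum_distrib_left real_sqrt_mult[symmetric] algebra_simps)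
    finally show ?thesis .
  qed (simp add: sum_lists_upto_Suc[OF fin])
qed simp

theorem reach_diff_le_expected_cost:
  assumes fin: "finite X" and p_nonneg: "\<And>t s x. p t s x \<ge> 0" and r_nonneg: "\<And>t s x. r t s x \<ge> 0"
    and X_S: "\<And>x. x \<in> X \<Longrightarrow> snd x \<in> S"
    and p_sum: "\<And>t s. s \<in> S \<Longrightarrow> s \<notin> T \<Longrightarrow> (\<Sum>x\<in>X. p t s x) = 1"
    and r_sum: "\<And>t s. s \<in> S \<Longrightarrow> s \<notin> T \<Longrightarrow> (\<Sum>x\<in>X. r t s x) \<le> 1"
    and good_S: "\<And>t s. good t s \<Longrightarrow> s \<in> S"
    and step: "\<And>t s x. good t s \<Longrightarrow> s \<notin> T \<Longrightarrow> x \<in> X \<Longrightarrow> p t s x > 0 \<Longrightarrow>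
        (snd x \<in> T \<or> good (Suc t) (snd x)) \<and> p t s x * exp (- g t s x) \<le> r t s x"
    and "s \<in> S" and start: "s \<in> T \<or> good t s" and "St \<subseteq> T"
  shows "(\<Sum>k<Suc n. \<Sum>h\<in>lists_of_len X k. if final_state s h \<in> St then path_weight p T t s h else 0)
       - (\<Sum>k<Suc n. \<Sum>h\<in>lists_of_len X k. if final_state s h \<in> St then path_weight r T t s h else 0)
       \<le> sqrt (1 - exp (- expected_cost p g T X n t s))"
proof -
  let ?P = "stopped_weight p T n t s" and ?Q = "stopped_weight r T n t s"
  define B where "B = (\<Sum>h\<in>lists_upto X n. sqrt (?P h * ?Q h))"
  have p_le: "\<And>t s. s \<in> S \<Longrightarrow> s \<notin> T \<Longrightarrow> (\<Sum>x\<in>X. p t s x) \<le> 1"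
    using p_sum by simp
  have "(\<Sum>h\<in>lists_upto X n. ?P h) \<le> 1"
    by (rule sum_stopped_weight_le_1[OF fin p_nonneg X_S p_le \<open>s \<in> S\<close>])
  moreover have "(\<Sum>h\<in>lists_upto X n. ?Q h) \<le> 1"
    by (rule sum_stopped_weight_le_1[OF fin r_nonneg X_S r_sum \<open>s \<in> S\<close>])
  ultimately have "(\<Sum>h\<in>lists_upto X n. if final_state s h \<in> St then ?P h else 0)
      - (\<Sum>h\<in>lists_upto X n. if final_state s h \<in> St then ?Q h else 0) \<le> sqrt (1 - B\<^sup>2)"
    unfolding B_def using finite_lists_upto[OF fin]
    by (intro event_diff_le_bhattacharyya) (auto intro: stopped_weight_nonneg p_nonneg r_nonneg)
  moreover have "exp (- expected_cost p g T X n t s / 2) \<le> B"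
    unfolding B_def
    by (rule exp_neg_half_expected_cost_le_bhattacharyya[OF fin p_nonneg r_nonneg X_S p_sum good_S step start])
  then have "exp (- expected_cost p g T X n t s) \<le> B\<^sup>2"
    by (metis power_mono exp_ge_zero exp_double power2_eq_square divide_minus_left
        field_sum_of_halves exp_add)
  ultimately show ?thesis
    unfolding sum_event_stopped_weight[OF fin \<open>St \<subseteq> T\<close>] by (meson order_trans real_sqrt_le_mono diff_left_mono)
qed

section \<open>The two processes of a cooperative Markov game as stopped processes\<close>

definition steps :: "('i, 'o, 'l, 'a) cmg \<Rightarrow> (('i \<Rightarrow> 'a) \<times> ('i, 'o, 'l) jstate) set" where
  "steps G = jacts G \<times> jstates G"

definition full_kernel :: "('i, 'o, 'l, 'a) cmg \<Rightarrow> (('i, 'o, 'l) jstate \<Rightarrow> ('i \<Rightarrow> 'a) pmf)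
    \<Rightarrow> nat \<Rightarrow> ('i, 'o, 'l) jstate \<Rightarrow> ('i \<Rightarrow> 'a) \<times> ('i, 'o, 'l) jstate \<Rightarrow> real" where
  "full_kernel G pa t s x = pmf (pa s) (fst x) * jtrans G s (fst x) (snd x)"

definition restr_kernel :: "('i, 'o, 'l, 'a) cmg \<Rightarrow> (('i \<Rightarrow> 'o) \<Rightarrow> 'i set pmf)
    \<Rightarrow> (nat \<Rightarrow> 'i set \<Rightarrow> ('i \<Rightarrow> 'o) \<Rightarrow> ('i \<Rightarrow> 'l) \<Rightarrow> (('i \<Rightarrow> 'a) \<times> ('i \<Rightarrow> 'o) \<times> ('i \<Rightarrow> 'l)) pmf)
    \<Rightarrow> nat \<Rightarrow> ('i, 'o, 'l) jstate \<Rightarrow> ('i \<Rightarrow> 'a) \<times> ('i, 'o, 'l) jstate \<Rightarrow> real" where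
  "restr_kernel G pc q t s x = rkernel G pc q t s (fst x) (snd x)"

definition loc_proj :: "'i set \<Rightarrow> ('i \<Rightarrow> 'a) \<times> ('i \<Rightarrow> 'o) \<times> ('i \<Rightarrow> 'l)
    \<Rightarrow> ('i \<Rightarrow> 'a) \<times> ('i \<Rightarrow> 'o) \<times> ('i \<Rightarrow> 'l)" where
  "loc_proj c x = (restrict (fst x) c, restrict (fst (snd x)) c, restrict (snd (snd x)) c)"

lemma fpath_eq_path_weight: "fpath G pa T s = path_weight (full_kernel G pa) T t s"
proof
  fix h
  show "fpath G pa T s h = path_weight (full_kernel G pa) T t s h"
    by (induction h arbitrary: s t) (auto simp: full_kernel_def)
qed

lemma rpath_eq_path_weight: "rpath G pc q T t s = path_weight (restr_kernel G pc q) T t s"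
proof
  fix h
  show "rpath G pc q T t s h = path_weight (restr_kernel G pc q) T t s h"
    by (induction h arbitrary: s t) (auto simp: restr_kernel_def)
qed

lemma last_st_eq_final_state: "last_st = final_state"
  by (intro ext) (simp add: last_st_def final_state_def)

lemma hists_eq_lists_of_len: "hists G n = lists_of_len (steps G) n"
  by (simp add: hists_def lists_of_len_def steps_def)

lemma fprobE_eq_surviving_weight: "fprobE G pa T h = surviving_weight (full_kernel G pa) T t (s_init G) h"
  by (simp add: fprobE_def surviving_weight_def last_st_eq_final_state fpath_eq_path_weight[of _ _ _ _ t])

lemma jtrans_nonneg: "jtrans G s a s' \<ge> 0"
  by (auto simp: jtrans_def intro: prod_nonneg)

lemma full_kernel_nonneg: "full_kernel G pa t s x \<ge> 0"
  by (simp add: full_kernel_def jtrans_nonneg)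

lemma restr_kernel_nonneg: "restr_kernel G pc q t s x \<ge> 0"
  by (auto simp: restr_kernel_def rkernel_def intro!: sum_nonneg mult_nonneg_nonneg prod_nonneg)

lemma fpath_nonneg: "fpath G pa T s h \<ge> 0"
  unfolding fpath_eq_path_weight[of _ _ _ _ 0] by (rule path_weight_nonneg) (rule full_kernel_nonneg)

lemma fprobE_nonneg: "fprobE G pa T h \<ge> 0"
  by (simp add: fprobE_def fpath_nonneg)

lemma fmarg_nonneg: "fmarg G pa T t c ob lc \<ge> 0"
  unfolding fmarg_def by (intro sum_nonneg) (simp add: fprobE_nonneg)

lemma fprobE_mult_full_kernel:
  "fprobE G pa T h * full_kernel G pa t (last_st (s_init G) h) x = fpath G pa T (s_init G) (h @ [x])"
  by (simp add: fprobE_def fpath_eq_path_weight[of _ _ _ _ 0] path_weight_snoc last_st_eq_final_state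
      full_kernel_def)

lemma finite_steps: "cmg_wf G \<Longrightarrow> finite (steps G)"
  unfolding steps_def jacts_def jstates_def
  by (intro finite_cartesian_product finite_PiE) (auto simp: cmg_wf_def)

lemma finite_hists: "cmg_wf G \<Longrightarrow> finite (hists G n)"
  by (simp add: hists_eq_lists_of_len finite_lists_of_len finite_steps)

lemma snd_in_jstates_if_steps: "x \<in> steps G \<Longrightarrow> snd x \<in> jstates G"
  by (auto simp: steps_def)

lemma s_init_in_jstates: "cmg_wf G \<Longrightarrow> s_init G \<in> jstates G"
  by (auto simp: cmg_wf_def s_init_def jstates_def)

lemma last_st_in_jstates:
  assumes "cmg_wf G" and "h \<in> hists G n"
  shows "last_st (s_init G) h \<in> jstates G"
proof (cases h rule: rev_cases)
  case (snoc h' x)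
  then show ?thesis
    using assms(2) by (auto simp: last_st_eq_final_state hists_def steps_def)
qed (simp add: last_st_eq_final_state s_init_in_jstates[OF assms(1)])

lemma finite_loc_triples:
  assumes "cmg_wf G" "c \<subseteq> agents G"
  shows "finite (loc_triples G c)"
proof -
  have "finite c"
    using assms finite_subset unfolding cmg_wf_def by blast
  then show ?thesis
    using assms unfolding loc_triples_def cmg_wf_def
    by (intro finite_cartesian_product finite_PiE) auto
qed

lemma loc_proj_in_loc_triples:
  "x \<in> steps G \<Longrightarrow> c \<subseteq> agents G \<Longrightarrow> loc_proj c x \<in> loc_triples G c"
  by (auto simp: loc_proj_def loc_triples_def steps_def jacts_def jstates_def PiE_iff)

lemma finite_comm_acts: "cmg_wf G \<Longrightarrow> finite (comm_acts G)"
  by (rule finite_subset[of _ "Pow (agents G)"]) (auto simp: comm_acts_def cmg_wf_def)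

lemma sum_pmf_le_1: "finite A \<Longrightarrow> (\<Sum>y\<in>A. pmf M y) \<le> 1"
  using measure_measure_pmf_finite[of A M] measure_pmf.prob_le_1[of M A] by simp

lemma sum_jtrans_eq_1:
  assumes wf: "cmg_wf G" and s: "s \<in> jstates G" and a: "a \<in> jacts G"
  shows "(\<Sum>s'\<in>jstates G. jtrans G s a s') = 1"
proof -
  let ?A = "agents G"
  define F where "F i z y = pmf (trans G i (fst s i, snd s i) (a i)) (z, y)" for i z y
  have fin: "finite ?A" "\<And>i. i \<in> ?A \<Longrightarrow> finite (pubS G i) \<and> finite (locS G i)"
    using wf by (simp_all add: cmg_wf_def)
  have F_sum: "(\<Sum>z\<in>pubS G i. \<Sum>y\<in>locS G i. F i z y) = 1" if i: "i \<in> ?A" for i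
  proof -
    have "(fst s i, snd s i) \<in> pubS G i \<times> locS G i" "a i \<in> acts G i"
      using s a i by (auto simp: jstates_def jacts_def PiE_iff)
    then have "set_pmf (trans G i (fst s i, snd s i) (a i)) \<subseteq> pubS G i \<times> locS G i"
      using wf i unfolding cmg_wf_def by blast
    then show ?thesis
      using fin(2)[OF i] by (simp add: F_def sum.cartesian_product case_prod_beta sum_pmf_eq_1)
  qed
  have "(\<Sum>s'\<in>jstates G. jtrans G s a s') = (\<Sum>s'\<in>jstates G. \<Prod>i\<in>?A. F i (fst s' i) (snd s' i))"
    by (intro sum.cong refl) (simp add: jtrans_def F_def)
  also have "\<dots> = (\<Sum>o'\<in>PiE ?A (pubS G). \<Sum>l'\<in>PiE ?A (locS G). \<Prod>i\<in>?A. F i (o' i) (l' i))"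
    unfolding jstates_def by (simp add: sum.cartesian_product case_prod_beta)
  also have "\<dots> = (\<Sum>o'\<in>PiE ?A (pubS G). \<Prod>i\<in>?A. \<Sum>y\<in>locS G i. F i (o' i) y)"
    by (intro sum.cong refl prod_sum_PiE[symmetric]) (use fin in auto)
  also have "\<dots> = (\<Prod>i\<in>?A. \<Sum>z\<in>pubS G i. \<Sum>y\<in>locS G i. F i z y)"
    by (rule prod_sum_PiE[symmetric]) (use fin in auto)
  also have "\<dots> = 1"
    using F_sum by simp
  finally show ?thesis .
qed

lemma sum_full_kernel_eq_1:
  assumes wf: "cmg_wf G" and pa: "pos_act_policy G pa" and s: "s \<in> jstates G"
  shows "(\<Sum>x\<in>steps G. full_kernel G pa t s x) = 1"
proof -
  have fin: "finite (jacts G)"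
    using wf by (auto simp: cmg_wf_def jacts_def intro!: finite_PiE)
  have "(\<Sum>x\<in>steps G. full_kernel G pa t s x)
      = (\<Sum>a\<in>jacts G. pmf (pa s) a * (\<Sum>s'\<in>jstates G. jtrans G s a s'))"
    unfolding steps_def by (simp add: full_kernel_def sum_distrib_left sum.cartesian_product case_prod_beta)
  also have "\<dots> = (\<Sum>a\<in>jacts G. pmf (pa s) a)"
    by (simp add: sum_jtrans_eq_1[OF wf s])
  also have "\<dots> = 1"
    using pa s fin by (intro sum_pmf_eq_1) (auto simp: pos_act_policy_def)
  finally show ?thesis .
qed

lemma eq_if_restrict_eq_split:
  assumes "f \<in> extensional A" "g \<in> extensional A" "restrict f c = restrict g c"
    "\<And>i. i \<in> A - c \<Longrightarrow> restrict f {i} = restrict g {i}"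
  shows "f = g"
proof
  fix i
  show "f i = g i"
  proof (cases "i \<in> A")
    case False
    then show ?thesis
      using extensional_arb[OF assms(1) False] extensional_arb[OF assms(2) False] by simp
  next
    case True
    show ?thesis
    proof (cases "i \<in> c")
      case True
      then show ?thesis
        using fun_cong[OF assms(3), of i] by simp
    next
      case False
      then have "restrict f {i} i = restrict g {i} i"
        using assms(4) \<open>i \<in> A\<close> by simp
      then show ?thesis
        by simp
    qed
  qed
qed

lemma inj_on_loc_projections:
  assumes "c \<subseteq> agents G"
  shows "inj_on (\<lambda>x. (loc_proj c x, \<lambda>i\<in>agents G - c. loc_proj {i} x)) (steps G)"
proof (rule inj_onI)
  fix x y
  assume x: "x \<in> steps G" and y: "y \<in> steps G"
    and eq: "(loc_proj c x, \<lambda>i\<in>agents G - c. loc_proj {i} x) = (loc_proj c y, \<lambda>i\<in>agents G - c. loc_proj {i} y)"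
  let ?A = "agents G"
  have c_eq: "restrict (fst x) c = restrict (fst y) c" "restrict (fst (snd x)) c = restrict (fst (snd y)) c"
      "restrict (snd (snd x)) c = restrict (snd (snd y)) c"
    using eq by (simp_all add: loc_proj_def)
  have "loc_proj {i} x = loc_proj {i} y" if "i \<in> ?A - c" for i
    using fun_cong[OF arg_cong[OF eq, of snd], of i] that by simp
  then have i_eq: "restrict (fst x) {i} = restrict (fst y) {i}"
      "restrict (fst (snd x)) {i} = restrict (fst (snd y)) {i}"
      "restrict (snd (snd x)) {i} = restrict (snd (snd y)) {i}" if "i \<in> ?A - c" for i
    using that by (simp_all add: loc_proj_def)
  have ext: "fst x \<in> extensional ?A" "fst y \<in> extensional ?A"
      "fst (snd x) \<in> extensional ?A" "fst (snd y) \<in> extensional ?A"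
      "snd (snd x) \<in> extensional ?A" "snd (snd y) \<in> extensional ?A"
    using x y by (auto simp: steps_def jacts_def jstates_def PiE_def)
  have "fst x = fst y"
    by (rule eq_if_restrict_eq_split[OF ext(1,2) c_eq(1) i_eq(1)])
  moreover have "fst (snd x) = fst (snd y)"
    by (rule eq_if_restrict_eq_split[OF ext(3,4) c_eq(2) i_eq(2)])
  moreover have "snd (snd x) = snd (snd y)"
    by (rule eq_if_restrict_eq_split[OF ext(5,6) c_eq(3) i_eq(3)])
  ultimately show "x = y"
    by (simp add: prod_eq_iff)
qed

lemma sum_factored_pmf_le_1:
  assumes wf: "cmg_wf G" and c: "c \<subseteq> agents G"
  shows "(\<Sum>x\<in>steps G. pmf Qc (loc_proj c x) * (\<Prod>i\<in>agents G - c. pmf (Qi i) (loc_proj {i} x))) \<le> 1"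
proof -
  let ?A = "agents G"
  let ?\<phi> = "\<lambda>x. (loc_proj c x, \<lambda>i\<in>?A - c. loc_proj {i} x)"
  define Z where "Z = loc_triples G c \<times> PiE (?A - c) (\<lambda>i. loc_triples G {i})"
  define F where "F z = pmf Qc (fst z) * (\<Prod>i\<in>?A - c. pmf (Qi i) (snd z i))" for z
  have fin_A: "finite ?A"
    using wf by (simp add: cmg_wf_def)
  have fin_loc: "finite (loc_triples G {i})" if "i \<in> ?A" for i
    using that by (intro finite_loc_triples[OF wf]) auto
  have "?\<phi> x \<in> Z" if "x \<in> steps G" for x
    using that c by (simp add: Z_def loc_proj_in_loc_triples restrict_PiE_iff)
  then have "?\<phi> ` steps G \<subseteq> Z"
    by blast
  moreover have "finite Z"
    unfolding Z_def using finite_loc_triples[OF wf c] fin_A fin_loc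
    by (intro finite_cartesian_product finite_PiE) auto
  moreover have "F z \<ge> 0" for z
    by (simp add: F_def prod_nonneg)
  ultimately have "(\<Sum>x\<in>steps G. F (?\<phi> x)) \<le> (\<Sum>z\<in>Z. F z)"
    unfolding sum.reindex[OF inj_on_loc_projections[OF c], symmetric, unfolded comp_def]
    by (intro sum_mono2) auto
  also have "\<dots> = (\<Sum>y\<in>loc_triples G c. pmf Qc y) *
      (\<Sum>f\<in>PiE (?A - c) (\<lambda>i. loc_triples G {i}). \<Prod>i\<in>?A - c. pmf (Qi i) (f i))"
    unfolding Z_def F_def sum_product sum.cartesian_product by (simp add: case_prod_beta)
  also have "(\<Sum>f\<in>PiE (?A - c) (\<lambda>i. loc_triples G {i}). \<Prod>i\<in>?A - c. pmf (Qi i) (f i))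
      = (\<Prod>i\<in>?A - c. \<Sum>z\<in>loc_triples G {i}. pmf (Qi i) z)"
    by (rule prod_sum_PiE[symmetric]) (use fin_A fin_loc in auto)
  also have "(\<Sum>y\<in>loc_triples G c. pmf Qc y) * (\<Prod>i\<in>?A - c. \<Sum>z\<in>loc_triples G {i}. pmf (Qi i) z)
      \<le> 1 * 1"
  proof (intro mult_mono)
    show "(\<Sum>y\<in>loc_triples G c. pmf Qc y) \<le> 1"
      by (rule sum_pmf_le_1[OF finite_loc_triples[OF wf c]])
    show "(\<Prod>i\<in>?A - c. \<Sum>z\<in>loc_triples G {i}. pmf (Qi i) z) \<le> 1"
      by (intro prod_le_1) (auto intro: sum_nonneg sum_pmf_le_1 fin_loc)
  qed (auto intro!: sum_nonneg prod_nonneg)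
  finally show ?thesis
    by (simp add: F_def)
qed

lemma sum_restr_kernel_le_1:
  assumes wf: "cmg_wf G"
  shows "(\<Sum>x\<in>steps G. restr_kernel G pc q t s x) \<le> 1"
proof -
  have "(\<Sum>x\<in>steps G. restr_kernel G pc q t s x) = (\<Sum>c\<in>comm_acts G. pmf (pc (fst s)) c *
      (\<Sum>x\<in>steps G. pmf (q t c (fst s) (restrict (snd s) c)) (loc_proj c x) *
       (\<Prod>i\<in>agents G - c. pmf (q t {i} (fst s) (restrict (snd s) {i})) (loc_proj {i} x))))"
    unfolding restr_kernel_def rkernel_def loc_proj_def sum_distrib_left mult.assoc
    by (rule sum.swap)
  also have "\<dots> \<le> (\<Sum>c\<in>comm_acts G. pmf (pc (fst s)) c * 1)"
    by (intro sum_mono mult_left_mono sum_factored_pmf_le_1[OF wf]) (auto simp: comm_acts_def)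
  also have "\<dots> \<le> 1"
    using sum_pmf_le_1[OF finite_comm_acts[OF wf]] by simp
  finally show ?thesis .
qed

definition pos_reachable :: "('i, 'o, 'l, 'a) cmg \<Rightarrow> (('i, 'o, 'l) jstate \<Rightarrow> ('i \<Rightarrow> 'a) pmf)
    \<Rightarrow> ('i, 'o, 'l) jstate set \<Rightarrow> nat \<Rightarrow> ('i, 'o, 'l) jstate \<Rightarrow> bool" where
  "pos_reachable G pa T t s \<longleftrightarrow>
     t \<ge> 1 \<and> (\<exists>h\<in>hists G (t - 1). last_st (s_init G) h = s \<and> fprobE G pa T h > 0)"

lemma pos_reachable_in_jstates: "cmg_wf G \<Longrightarrow> pos_reachable G pa T t s \<Longrightarrow> s \<in> jstates G"
  unfolding pos_reachable_def using last_st_in_jstates by blast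

lemma pos_reachable_init: "s_init G \<notin> T \<Longrightarrow> pos_reachable G pa T 1 (s_init G)"
  unfolding pos_reachable_def by (auto simp: hists_def fprobE_def last_st_def intro!: bexI[of _ "[]"])

lemma pos_reachable_step:
  assumes "pos_reachable G pa T t s" and "x \<in> steps G" and "full_kernel G pa t s x > 0"
  shows "snd x \<in> T \<or> pos_reachable G pa T (Suc t) (snd x)"
proof (cases "snd x \<in> T")
  case False
  from assms(1) obtain h where "t \<ge> 1" and h: "h \<in> hists G (t - 1)"
    and s: "last_st (s_init G) h = s" and pos: "fprobE G pa T h > 0"
    by (auto simp: pos_reachable_def)
  have "h @ [x] \<in> hists G t"
    using h assms(2) \<open>t \<ge> 1\<close> by (auto simp: hists_def steps_def)
  moreover have "fprobE G pa T (h @ [x]) = fprobE G pa T h * full_kernel G pa t s x"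
    using False s fprobE_mult_full_kernel[of G pa T h t x]
    by (simp add: fprobE_def last_st_eq_final_state)
  ultimately show ?thesis
    unfolding pos_reachable_def using pos assms(3)
    by (auto simp: last_st_eq_final_state intro!: bexI[of _ "h @ [x]"])
qed simp

lemma pmf_q_eq_qfull:
  assumes "q_admissible G pa T q" and "c \<in> comm_acts G \<or> (\<exists>i\<in>agents G. c = {i})"
    and "t \<ge> 1" and "ob \<in> pubs G" and "lc \<in> PiE c (locS G)" and "fmarg G pa T t c ob lc > 0"
  shows "pmf (q t c ob lc) y = qfull G pa T t c ob lc y"
  using assms unfolding q_admissible_def by blast

lemma fmarg_pos:
  assumes wf: "cmg_wf G" and h: "h \<in> hists G (t - 1)" and pos: "fprobE G pa T h > 0"
  shows "fmarg G pa T t c (fst (last_st (s_init G) h)) (restrict (snd (last_st (s_init G) h)) c) > 0"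
proof -
  let ?s = "last_st (s_init G) h"
  have "fprobE G pa T h \<le> (\<Sum>h'\<in>hists G (t - 1).
      if fst (last_st (s_init G) h') = fst ?s \<and> restrict (snd (last_st (s_init G) h')) c = restrict (snd ?s) c
      then fprobE G pa T h' else 0)"
    using member_le_sum[OF h, of "\<lambda>h'. if fst (last_st (s_init G) h') = fst ?s \<and>
        restrict (snd (last_st (s_init G) h')) c = restrict (snd ?s) c then fprobE G pa T h' else 0"]
    by (simp add: fprobE_nonneg finite_hists[OF wf])
  then show ?thesis
    using pos unfolding fmarg_def by simp
qed

lemma fjoint_pos:
  assumes wf: "cmg_wf G" and "t \<ge> 1" and h: "h \<in> hists G (t - 1)" and x: "x \<in> steps G"
    and pos: "fpath G pa T (s_init G) (h @ [x]) > 0"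
  shows "fjoint G pa T t c (fst (last_st (s_init G) h)) (restrict (snd (last_st (s_init G) h)) c)
           (loc_proj c x) > 0"
proof -
  let ?s = "last_st (s_init G) h"
  define F where "F h' = (let s = last_st (s_init G) (butlast h'); a = fst (last h'); s1 = snd (last h') in
       if fst s = fst ?s \<and> restrict (snd s) c = restrict (snd ?s) c \<and>
          (restrict a c, restrict (fst s1) c, restrict (snd s1) c) = loc_proj c x
       then fpath G pa T (s_init G) h' else 0)" for h'
  have "h @ [x] \<in> hists G t"
    using h x \<open>t \<ge> 1\<close> by (auto simp: hists_def steps_def)
  then have "F (h @ [x]) \<le> (\<Sum>h'\<in>hists G t. F h')"
    by (rule member_le_sum) (simp_all add: F_def Let_def fpath_nonneg finite_hists[OF wf])
  moreover have "F (h @ [x]) = fpath G pa T (s_init G) (h @ [x])"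
    by (simp add: F_def loc_proj_def)
  ultimately show ?thesis
    using pos unfolding fjoint_def F_def[abs_def] by simp
qed

lemma pmf_q_pos:
  assumes wf: "cmg_wf G" and adm: "q_admissible G pa T q"
    and reach: "pos_reachable G pa T t s" and "s \<notin> T" and x: "x \<in> steps G"
    and p: "full_kernel G pa t s x > 0"
    and c: "c \<in> comm_acts G \<or> (\<exists>i\<in>agents G. c = {i})"
  shows "pmf (q t c (fst s) (restrict (snd s) c)) (loc_proj c x) > 0"
proof -
  from reach obtain h where "t \<ge> 1" and h: "h \<in> hists G (t - 1)"
    and s: "last_st (s_init G) h = s" and pos: "fprobE G pa T h > 0"
    by (auto simp: pos_reachable_def)
  have "s \<in> jstates G"
    by (rule pos_reachable_in_jstates[OF wf reach])
  then have ob: "fst s \<in> pubs G" and lc: "restrict (snd s) c \<in> PiE c (locS G)"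
    using c by (auto simp: jstates_def pubs_def comm_acts_def PiE_iff)
  have marg: "fmarg G pa T t c (fst s) (restrict (snd s) c) > 0"
    using fmarg_pos[OF wf h pos] s by simp
  have "fpath G pa T (s_init G) (h @ [x]) > 0"
    using pos p s fprobE_mult_full_kernel[of G pa T h t x] by (metis mult_pos_pos)
  then have "fjoint G pa T t c (fst s) (restrict (snd s) c) (loc_proj c x) > 0"
    using fjoint_pos[OF wf \<open>t \<ge> 1\<close> h x] s by simp
  then show ?thesis
    using marg pmf_q_eq_qfull[OF adm c \<open>t \<ge> 1\<close> ob lc marg] by (simp add: qfull_def)
qed

definition q_step :: "(nat \<Rightarrow> 'i set \<Rightarrow> ('i \<Rightarrow> 'o) \<Rightarrow> ('i \<Rightarrow> 'l) \<Rightarrow> (('i \<Rightarrow> 'a) \<times> ('i \<Rightarrow> 'o) \<times> ('i \<Rightarrow> 'l)) pmf)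
    \<Rightarrow> nat \<Rightarrow> ('i, 'o, 'l) jstate \<Rightarrow> 'i set \<Rightarrow> ('i \<Rightarrow> 'a) \<times> ('i, 'o, 'l) jstate \<Rightarrow> real" where
  "q_step q t s c x = pmf (q t c (fst s) (restrict (snd s) c)) (loc_proj c x)"

text \<open>The log-ratio of the full kernel to the geometric mean, weighted by the communication policy,
  of the factors q^c and q^i (i \<notin> c) of the restricted kernel.\<close>

definition log_ratio :: "('i, 'o, 'l, 'a) cmg \<Rightarrow> (('i, 'o, 'l) jstate \<Rightarrow> ('i \<Rightarrow> 'a) pmf)
    \<Rightarrow> (('i \<Rightarrow> 'o) \<Rightarrow> 'i set pmf)
    \<Rightarrow> (nat \<Rightarrow> 'i set \<Rightarrow> ('i \<Rightarrow> 'o) \<Rightarrow> ('i \<Rightarrow> 'l) \<Rightarrow> (('i \<Rightarrow> 'a) \<times> ('i \<Rightarrow> 'o) \<times> ('i \<Rightarrow> 'l)) pmf)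
    \<Rightarrow> nat \<Rightarrow> ('i, 'o, 'l) jstate \<Rightarrow> ('i \<Rightarrow> 'a) \<times> ('i, 'o, 'l) jstate \<Rightarrow> real" where
  "log_ratio G pa pc q t s x = ln (full_kernel G pa t s x)
     - (\<Sum>c\<in>comm_acts G. pmf (pc (fst s)) c * ln (q_step q t s c x))
     - (\<Sum>i\<in>agents G. wprime G pc (fst s) i * ln (q_step q t s {i} x))"

lemma sum_wprime_mult:
  assumes wf: "cmg_wf G"
  shows "(\<Sum>i\<in>agents G. wprime G pc ob i * L i) = (\<Sum>c\<in>comm_acts G. pmf (pc ob) c * (\<Sum>i\<in>agents G - c. L i))"
proof -
  have fin: "finite (agents G)" "finite (comm_acts G)"
    using wf finite_comm_acts by (auto simp: cmg_wf_def)
  have "wprime G pc ob i = (\<Sum>c\<in>comm_acts G. if i \<notin> c then pmf (pc ob) c else 0)" for i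
    unfolding wprime_def using fin by (simp add: sum.inter_filter)
  then have "(\<Sum>i\<in>agents G. wprime G pc ob i * L i)
      = (\<Sum>i\<in>agents G. \<Sum>c\<in>comm_acts G. if i \<notin> c then pmf (pc ob) c * L i else 0)"
    by (auto simp: sum_distrib_right intro!: sum.cong)
  also have "\<dots> = (\<Sum>c\<in>comm_acts G. \<Sum>i\<in>agents G. if i \<notin> c then pmf (pc ob) c * L i else 0)"
    by (rule sum.swap)
  also have "\<dots> = (\<Sum>c\<in>comm_acts G. pmf (pc ob) c * (\<Sum>i\<in>agents G - c. L i))"
    using fin by (simp add: sum.inter_filter[symmetric] sum_distrib_left set_diff_eq)
  finally show ?thesis .
qed

lemma full_kernel_mult_exp_neg_log_ratio_le:
  assumes wf: "cmg_wf G" and adm: "q_admissible G pa T q" and pc: "pos_comm_policy G pc"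
    and reach: "pos_reachable G pa T t s" and "s \<notin> T" and x: "x \<in> steps G"
    and p: "full_kernel G pa t s x > 0"
  shows "full_kernel G pa t s x * exp (- log_ratio G pa pc q t s x) \<le> restr_kernel G pc q t s x"
proof -
  let ?A = "agents G" and ?C = "comm_acts G"
  define w where "w c = pmf (pc (fst s)) c" for c
  define Y where "Y c = q_step q t s c x * (\<Prod>i\<in>?A - c. q_step q t s {i} x)" for c
  have fin: "finite ?A" "finite ?C"
    using wf finite_comm_acts by (auto simp: cmg_wf_def)
  have q_c: "q_step q t s c x > 0" if "c \<in> ?C" for c
    unfolding q_step_def using that by (intro pmf_q_pos[OF wf adm reach \<open>s \<notin> T\<close> x p]) auto
  have q_i: "q_step q t s {i} x > 0" if "i \<in> ?A" for i
    unfolding q_step_def using that by (intro pmf_q_pos[OF wf adm reach \<open>s \<notin> T\<close> x p]) auto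
  have prod_pos: "(\<Prod>i\<in>?A - c. q_step q t s {i} x) > 0" for c
    using q_i by (intro prod_pos) auto
  have Y_pos: "Y c > 0" if "c \<in> ?C" for c
    unfolding Y_def using q_c[OF that] prod_pos by simp
  have ln_Y: "ln (Y c) = ln (q_step q t s c x) + (\<Sum>i\<in>?A - c. ln (q_step q t s {i} x))"
    if "c \<in> ?C" for c
  proof -
    have "ln (\<Prod>i\<in>?A - c. q_step q t s {i} x) = (\<Sum>i\<in>?A - c. ln (q_step q t s {i} x))"
      using fin(1) q_i by (intro ln_prod) (auto simp: less_le)
    then show ?thesis
      unfolding Y_def using q_c[OF that] prod_pos[of c] by (simp add: ln_mult)
  qed
  have "fst s \<in> pubs G"
    using pos_reachable_in_jstates[OF wf reach] by (simp add: jstates_def pubs_def mem_Times_iff)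
  then have w_sum: "(\<Sum>c\<in>?C. w c) = 1"
    unfolding w_def using pc fin by (intro sum_pmf_eq_1) (auto simp: pos_comm_policy_def)
  have "- log_ratio G pa pc q t s x = - ln (full_kernel G pa t s x) + (\<Sum>c\<in>?C. w c * ln (Y c))"
    by (simp add: log_ratio_def w_def ln_Y distrib_left sum.distrib sum_wprime_mult[OF wf])
  then have "full_kernel G pa t s x * exp (- log_ratio G pa pc q t s x) = exp (\<Sum>c\<in>?C. w c * ln (Y c))"
    using p by (simp add: exp_diff)
  also have "\<dots> \<le> (\<Sum>c\<in>?C. w c * exp (ln (Y c)))"
    by (rule exp_sum_le_sum_exp[OF fin(2) _ w_sum]) (simp add: w_def)
  also have "\<dots> = restr_kernel G pc q t s x"
    using Y_pos by (simp add: restr_kernel_def rkernel_def Y_def w_def q_step_def loc_proj_def mult.assoc)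
  finally show ?thesis .
qed

definition step_cost :: "('i, 'o, 'l, 'a) cmg \<Rightarrow> (('i \<Rightarrow> 'o) \<Rightarrow> 'i set pmf)
    \<Rightarrow> (('i, 'o, 'l) jstate \<Rightarrow> ('i \<Rightarrow> 'a) pmf) \<Rightarrow> ('i, 'o, 'l) jstate set \<Rightarrow> nat \<Rightarrow> real" where
  "step_cost G pc pa T t = (\<Sum>i\<in>agents G. Gi_term G pc pa T i t) + (\<Sum>c\<in>comm_acts G. Gc_term G pc pa T c t)
     - Hent G pa T t"

lemma sum_regroup:
  assumes "finite H" "finite K1" "finite K2" "\<And>h. h \<in> H \<Longrightarrow> k1 h \<in> K1 \<and> k2 h \<in> K2"
  shows "(\<Sum>h\<in>H. f h) = (\<Sum>a\<in>K1. \<Sum>b\<in>K2. \<Sum>h\<in>H. if k1 h = a \<and> k2 h = b then f h else (0::real))"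
proof -
  have "(\<Sum>a\<in>K1. \<Sum>b\<in>K2. \<Sum>h\<in>H. if k1 h = a \<and> k2 h = b then f h else 0)
      = (\<Sum>a\<in>K1. \<Sum>h\<in>H. \<Sum>b\<in>K2. if k1 h = a \<and> k2 h = b then f h else 0)"
    by (intro sum.cong refl sum.swap)
  also have "\<dots> = (\<Sum>h\<in>H. \<Sum>a\<in>K1. \<Sum>b\<in>K2. if k1 h = a \<and> k2 h = b then f h else 0)"
    by (rule sum.swap)
  also have "\<dots> = (\<Sum>h\<in>H. f h)"
  proof (intro sum.cong refl)
    fix h assume h: "h \<in> H"
    have "(\<Sum>b\<in>K2. if k1 h = a \<and> k2 h = b then f h else 0) = (if k1 h = a then f h else 0)" for a
      using assms(3) assms(4)[OF h] by (cases "k1 h = a") (simp_all add: sum.delta)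
    then show "(\<Sum>a\<in>K1. \<Sum>b\<in>K2. if k1 h = a \<and> k2 h = b then f h else 0) = f h"
      using assms(2) assms(4)[OF h] by (simp add: sum.delta)
  qed
  finally show ?thesis
    by simp
qed

lemma xlogx_eq: "xlogx p = p * ln p"
  by (simp add: xlogx_def)

lemma sum_fprobE_full_kernel_log_eq_neg_Hent:
  "(\<Sum>h\<in>hists G k. fprobE G pa T h * (\<Sum>x\<in>steps G. full_kernel G pa t (last_st (s_init G) h) x *
       ln (full_kernel G pa t (last_st (s_init G) h) x)))
     = - Hent G pa T (Suc k)"
proof -
  have "fprobE G pa T h * (\<Sum>x\<in>steps G. full_kernel G pa t (last_st (s_init G) h) x *
         ln (full_kernel G pa t (last_st (s_init G) h) x))
      = - (fprobE G pa T h * entropy_on (\<lambda>x. fpath G pa T (s_init G) (h @ [x]) / fprobE G pa T h)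
          (jacts G \<times> jstates G))" for h
  proof (cases "fprobE G pa T h = 0")
    case False
    then have "fpath G pa T (s_init G) (h @ [x]) / fprobE G pa T h = full_kernel G pa t (last_st (s_init G) h) x"
      for x
      by (simp add: fprobE_mult_full_kernel[of _ _ _ _ t, symmetric])
    then show ?thesis
      by (simp add: entropy_on_def xlogx_eq steps_def)
  qed simp
  then show ?thesis
    by (simp add: Hent_def sum_negf)
qed

text \<open>Conditioning on the public state and the local states of c at the time of a step turns the
  step distribution into the joint law fjoint of the next step.\<close>

lemma sum_fprobE_full_kernel_eq_sum_fjoint:
  fixes G :: "('i, 'o, 'l, 'a) cmg"
  assumes wf: "cmg_wf G" and c: "c \<subseteq> agents G"
  shows "(\<Sum>h\<in>hists G k. if fst (last_st (s_init G) h) = ob \<and> restrict (snd (last_st (s_init G) h)) c = lc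
           then fprobE G pa T h * (\<Sum>x\<in>steps G. full_kernel G pa t (last_st (s_init G) h) x * F (loc_proj c x))
           else 0)
       = (\<Sum>y\<in>loc_triples G c. fjoint G pa T (Suc k) c ob lc y * F y)"
proof -
  define cond where "cond h \<longleftrightarrow>
    fst (last_st (s_init G) h) = ob \<and> restrict (snd (last_st (s_init G) h)) c = lc"
    for h :: "('i, 'o, 'l, 'a) hist"
  have "(\<Sum>h\<in>hists G k. if cond h
           then fprobE G pa T h * (\<Sum>x\<in>steps G. full_kernel G pa t (last_st (s_init G) h) x * F (loc_proj c x))
           else 0)
      = (\<Sum>h\<in>hists G k. \<Sum>x\<in>steps G. if cond h then fpath G pa T (s_init G) (h @ [x]) * F (loc_proj c x) else 0)"
    by (intro sum.cong refl)
      (auto simp: sum_distrib_left fprobE_mult_full_kernel[of _ _ _ _ t, symmetric] mult.assoc)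
  also have "\<dots> = (\<Sum>h'\<in>hists G (Suc k).
      if cond (butlast h') then fpath G pa T (s_init G) h' * F (loc_proj c (last h')) else 0)"
    unfolding hists_eq_lists_of_len sum_lists_of_len_Suc_snoc[OF finite_steps[OF wf]] last_snoc butlast_snoc
    by (rule refl)
  also have "\<dots> = (\<Sum>h'\<in>hists G (Suc k). \<Sum>y\<in>loc_triples G c. if loc_proj c (last h') = y then
      (if cond (butlast h') then fpath G pa T (s_init G) h' else 0) * F y else 0)"
  proof (intro sum.cong refl)
    fix h' assume "h' \<in> hists G (Suc k)"
    then have "last h' \<in> steps G"
      by (cases h' rule: rev_cases) (auto simp: hists_def steps_def)
    then have "loc_proj c (last h') \<in> loc_triples G c"
      using loc_proj_in_loc_triples c by blast
    then show "(if cond (butlast h') then fpath G pa T (s_init G) h' * F (loc_proj c (last h')) else 0)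
      = (\<Sum>y\<in>loc_triples G c. if loc_proj c (last h') = y then
          (if cond (butlast h') then fpath G pa T (s_init G) h' else 0) * F y else 0)"
      using finite_loc_triples[OF wf c] by (simp add: sum.delta)
  qed
  also have "\<dots> = (\<Sum>y\<in>loc_triples G c. fjoint G pa T (Suc k) c ob lc y * F y)"
    unfolding fjoint_def sum_distrib_right
    by (subst sum.swap) (intro sum.cong refl, auto simp: Let_def cond_def loc_proj_def)
  finally show ?thesis
    by (simp add: cond_def)
qed

lemma sum_fprobE_neg_log_q_block:
  assumes wf: "cmg_wf G" and adm: "q_admissible G pa T q"
    and c: "c \<in> comm_acts G \<or> (\<exists>i\<in>agents G. c = {i})"
    and ob: "ob \<in> pubs G" and lc: "lc \<in> PiE c (locS G)"
  shows "(\<Sum>h\<in>hists G k. if fst (last_st (s_init G) h) = ob \<and> restrict (snd (last_st (s_init G) h)) c = lc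
           then fprobE G pa T h * (\<Sum>x\<in>steps G. full_kernel G pa t (last_st (s_init G) h) x *
             (w * - ln (pmf (q (Suc k) c ob lc) (loc_proj c x))))
           else 0)
       = w * fmarg G pa T (Suc k) c ob lc * entropy_on (qfull G pa T (Suc k) c ob lc) (loc_triples G c)"
    (is "?L = ?R")
proof (cases "fmarg G pa T (Suc k) c ob lc = 0")
  case True
  then have "\<forall>h\<in>hists G k. (if fst (last_st (s_init G) h) = ob \<and> restrict (snd (last_st (s_init G) h)) c = lc
      then fprobE G pa T h else 0) = 0"
    unfolding fmarg_def using finite_hists[OF wf]
    by (subst sum_nonneg_eq_0_iff[symmetric]) (auto simp: fprobE_nonneg)
  then have "?L = 0"
    by (intro sum.neutral) auto
  then show ?thesis
    using True by simp
next
  case False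
  then have pos: "fmarg G pa T (Suc k) c ob lc > 0"
    using fmarg_nonneg[of G pa T "Suc k" c ob lc] by simp
  have c_agents: "c \<subseteq> agents G"
    using c by (auto simp: comm_acts_def)
  have q_eq: "pmf (q (Suc k) c ob lc) y = qfull G pa T (Suc k) c ob lc y" for y
    by (rule pmf_q_eq_qfull[OF adm c _ ob lc pos]) simp
  have "?L = (\<Sum>y\<in>loc_triples G c. fjoint G pa T (Suc k) c ob lc y * (w * - ln (pmf (q (Suc k) c ob lc) y)))"
    by (rule sum_fprobE_full_kernel_eq_sum_fjoint[OF wf c_agents])
  also have "\<dots> = (\<Sum>y\<in>loc_triples G c.
      fmarg G pa T (Suc k) c ob lc * qfull G pa T (Suc k) c ob lc y * (w * - ln (qfull G pa T (Suc k) c ob lc y)))"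
    using pos by (intro sum.cong refl) (simp add: qfull_def q_eq)
  also have "\<dots> = ?R"
    by (simp add: entropy_on_def xlogx_eq sum_distrib_left sum_negf algebra_simps)
  finally show ?thesis .
qed

lemma sum_fprobE_neg_log_q:
  assumes wf: "cmg_wf G" and adm: "q_admissible G pa T q"
    and c: "c \<in> comm_acts G \<or> (\<exists>i\<in>agents G. c = {i})"
  shows "(\<Sum>h\<in>hists G k. fprobE G pa T h * (\<Sum>x\<in>steps G. full_kernel G pa t (last_st (s_init G) h) x *
           (W (fst (last_st (s_init G) h)) * - ln (q_step q (Suc k) (last_st (s_init G) h) c x))))
     = (\<Sum>ob\<in>pubs G. \<Sum>lc\<in>PiE c (locS G). W ob * fmarg G pa T (Suc k) c ob lc *
           entropy_on (qfull G pa T (Suc k) c ob lc) (loc_triples G c))"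
proof -
  have c_agents: "c \<subseteq> agents G"
    using c by (auto simp: comm_acts_def)
  have fin: "finite (pubs G)" "finite (PiE c (locS G))"
    using wf c_agents finite_subset[OF c_agents]
    unfolding pubs_def cmg_wf_def by (auto intro!: finite_PiE)
  have keys: "fst (last_st (s_init G) h) \<in> pubs G \<and> restrict (snd (last_st (s_init G) h)) c \<in> PiE c (locS G)"
    if "h \<in> hists G k" for h
    using last_st_in_jstates[OF wf that] c_agents by (auto simp: jstates_def pubs_def PiE_iff)
  have "(\<Sum>h\<in>hists G k. fprobE G pa T h * (\<Sum>x\<in>steps G. full_kernel G pa t (last_st (s_init G) h) x *
           (W (fst (last_st (s_init G) h)) * - ln (q_step q (Suc k) (last_st (s_init G) h) c x))))
      = (\<Sum>ob\<in>pubs G. \<Sum>lc\<in>PiE c (locS G). \<Sum>h\<in>hists G k.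
          if fst (last_st (s_init G) h) = ob \<and> restrict (snd (last_st (s_init G) h)) c = lc
          then fprobE G pa T h * (\<Sum>x\<in>steps G. full_kernel G pa t (last_st (s_init G) h) x *
             (W ob * - ln (pmf (q (Suc k) c ob lc) (loc_proj c x))))
          else 0)"
    (is "?L = ?M")
  proof -
    have "?L = (\<Sum>ob\<in>pubs G. \<Sum>lc\<in>PiE c (locS G). \<Sum>h\<in>hists G k.
          if fst (last_st (s_init G) h) = ob \<and> restrict (snd (last_st (s_init G) h)) c = lc
          then fprobE G pa T h * (\<Sum>x\<in>steps G. full_kernel G pa t (last_st (s_init G) h) x *
           (W (fst (last_st (s_init G) h)) * - ln (q_step q (Suc k) (last_st (s_init G) h) c x)))
          else 0)"
      by (rule sum_regroup[OF finite_hists[OF wf] fin keys])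
    also have "\<dots> = ?M"
      by (intro sum.cong refl) (auto simp: q_step_def)
    finally show ?thesis .
  qed
  also have "\<dots> = (\<Sum>ob\<in>pubs G. \<Sum>lc\<in>PiE c (locS G). W ob * fmarg G pa T (Suc k) c ob lc *
           entropy_on (qfull G pa T (Suc k) c ob lc) (loc_triples G c))"
    by (intro sum.cong refl sum_fprobE_neg_log_q_block[OF wf adm c])
  finally show ?thesis .
qed

lemma full_kernel_mult_log_ratio:
  "full_kernel G pa t s x * log_ratio G pa pc q t s x =
     full_kernel G pa t s x * ln (full_kernel G pa t s x)
     + (\<Sum>c\<in>comm_acts G. full_kernel G pa t s x * (pmf (pc (fst s)) c * - ln (q_step q t s c x)))
     + (\<Sum>i\<in>agents G. full_kernel G pa t s x * (wprime G pc (fst s) i * - ln (q_step q t s {i} x)))"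
  unfolding log_ratio_def by (simp add: sum_distrib_left[symmetric] sum_negf right_diff_distrib)

lemma expected_log_ratio_eq_step_cost:
  fixes G :: "('i, 'o, 'l, 'a) cmg"
  assumes wf: "cmg_wf G" and adm: "q_admissible G pa T q"
  shows "(\<Sum>h\<in>lists_of_len (steps G) k. surviving_weight (full_kernel G pa) T 1 (s_init G) h *
       (\<Sum>x\<in>steps G. full_kernel G pa (1 + k) (final_state (s_init G) h) x *
          log_ratio G pa pc q (1 + k) (final_state (s_init G) h) x))
     = step_cost G pc pa T (Suc k)"
proof -
  let ?s = "\<lambda>h :: ('i, 'o, 'l, 'a) hist. last_st (s_init G) h"
  let ?p = "full_kernel G pa (Suc k)"
  define A where "A h = fprobE G pa T h * (\<Sum>x\<in>steps G. ?p (?s h) x * ln (?p (?s h) x))" for h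
  define B where "B c h = fprobE G pa T h * (\<Sum>x\<in>steps G. ?p (?s h) x *
      (pmf (pc (fst (?s h))) c * - ln (q_step q (Suc k) (?s h) c x)))" for c h
  define C where "C i h = fprobE G pa T h * (\<Sum>x\<in>steps G. ?p (?s h) x *
      (wprime G pc (fst (?s h)) i * - ln (q_step q (Suc k) (?s h) {i} x)))" for i h
  have "(\<Sum>h\<in>lists_of_len (steps G) k. surviving_weight (full_kernel G pa) T 1 (s_init G) h *
       (\<Sum>x\<in>steps G. full_kernel G pa (1 + k) (final_state (s_init G) h) x *
          log_ratio G pa pc q (1 + k) (final_state (s_init G) h) x))
     = (\<Sum>h\<in>hists G k. A h + (\<Sum>c\<in>comm_acts G. B c h) + (\<Sum>i\<in>agents G. C i h))"
    unfolding hists_eq_lists_of_len A_def B_def C_def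
    by (intro sum.cong refl)
      (simp add: fprobE_eq_surviving_weight[of _ _ _ _ 1] last_st_eq_final_state full_kernel_mult_log_ratio
        sum.distrib sum_distrib_left distrib_left sum.swap[of _ "steps G"])
  also have "\<dots> = (\<Sum>h\<in>hists G k. A h) + (\<Sum>c\<in>comm_acts G. \<Sum>h\<in>hists G k. B c h)
      + (\<Sum>i\<in>agents G. \<Sum>h\<in>hists G k. C i h)"
    by (simp add: sum.distrib sum.swap[of _ "hists G k"])
  also have "(\<Sum>h\<in>hists G k. A h) = - Hent G pa T (Suc k)"
    unfolding A_def by (rule sum_fprobE_full_kernel_log_eq_neg_Hent)
  also have "(\<Sum>c\<in>comm_acts G. \<Sum>h\<in>hists G k. B c h) = (\<Sum>c\<in>comm_acts G. Gc_term G pc pa T c (Suc k))"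
    unfolding B_def Gc_term_def
    by (intro sum.cong refl sum_fprobE_neg_log_q[OF wf adm, where W = "\<lambda>ob. pmf (pc ob) _"]) auto
  also have "(\<Sum>i\<in>agents G. \<Sum>h\<in>hists G k. C i h) = (\<Sum>i\<in>agents G. Gi_term G pc pa T i (Suc k))"
    unfolding C_def Gi_term_def
    by (intro sum.cong refl sum_fprobE_neg_log_q[OF wf adm, where W = "\<lambda>ob. wprime G pc ob _"]) auto
  finally show ?thesis
    by (simp add: step_cost_def)
qed

lemma entropy_term_nonneg:
  assumes adm: "q_admissible G pa T q" and c: "c \<in> comm_acts G \<or> (\<exists>i\<in>agents G. c = {i})"
    and "t \<ge> 1" and ob: "ob \<in> pubs G" and lc: "lc \<in> PiE c (locS G)" and "w \<ge> 0"
  shows "w * fmarg G pa T t c ob lc * entropy_on (qfull G pa T t c ob lc) (loc_triples G c) \<ge> 0"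
proof (cases "fmarg G pa T t c ob lc = 0")
  case False
  then have pos: "fmarg G pa T t c ob lc > 0"
    using fmarg_nonneg[of G pa T t c ob lc] by simp
  have "xlogx (qfull G pa T t c ob lc y) \<le> 0" for y
  proof -
    have "pmf (q t c ob lc) y * ln (pmf (q t c ob lc) y) \<le> 0"
      using pmf_le_1[of "q t c ob lc" y] pmf_nonneg[of "q t c ob lc" y]
      by (cases "pmf (q t c ob lc) y = 0") (auto intro!: mult_nonneg_nonpos)
    then show ?thesis
      using pmf_q_eq_qfull[OF adm c \<open>t \<ge> 1\<close> ob lc pos] by (simp add: xlogx_eq)
  qed
  then have "entropy_on (qfull G pa T t c ob lc) (loc_triples G c) \<ge> 0"
    unfolding entropy_on_def by (simp add: sum_nonpos)
  then show ?thesis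
    using \<open>w \<ge> 0\<close> fmarg_nonneg[of G pa T t c ob lc] by simp
qed simp

lemma Gi_term_nonneg:
  assumes "q_admissible G pa T q" and "i \<in> agents G" and "t \<ge> 1"
  shows "Gi_term G pc pa T i t \<ge> 0"
  unfolding Gi_term_def using assms
  by (intro sum_nonneg entropy_term_nonneg) (auto simp: wprime_def intro: sum_nonneg)

lemma Gc_term_nonneg:
  assumes "q_admissible G pa T q" and "c \<in> comm_acts G" and "t \<ge> 1"
  shows "Gc_term G pc pa T c t \<ge> 0"
  unfolding Gc_term_def using assms by (intro sum_nonneg entropy_term_nonneg) auto

section \<open>Passing to the limit\<close>

definition until_term :: "('i, 'o, 'l, 'a) cmg \<Rightarrow> (('i, 'o, 'l, 'a) hist \<Rightarrow> real) \<Rightarrow> ('i, 'o, 'l) jstate set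
    \<Rightarrow> nat \<Rightarrow> real" where
  "until_term G hp St n = (\<Sum>h\<in>hists G n. if last_st (s_init G) h \<in> St then hp h else 0)"

lemma until_prob_eq_suminf: "until_prob G hp St = (\<Sum>n. until_term G hp St n)"
  by (simp add: until_prob_def until_term_def)

lemma until_term_path_weight:
  "until_term G (path_weight k T t (s_init G)) St n = (\<Sum>h\<in>lists_of_len (steps G) n.
     if final_state (s_init G) h \<in> St then path_weight k T t (s_init G) h else 0)"
  by (simp add: until_term_def hists_eq_lists_of_len last_st_eq_final_state)

lemma until_term_path_weight_summable:
  assumes wf: "cmg_wf G" and nonneg: "\<And>t s x. k t s x \<ge> 0"
    and sum_le: "\<And>t s. s \<in> jstates G \<Longrightarrow> s \<notin> T \<Longrightarrow> (\<Sum>x\<in>steps G. k t s x) \<le> 1" and "St \<subseteq> T"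
  shows "summable (until_term G (path_weight k T t (s_init G)) St)"
    and "0 \<le> until_prob G (path_weight k T t (s_init G)) St"
    and "until_prob G (path_weight k T t (s_init G)) St \<le> 1"
proof -
  let ?a = "until_term G (path_weight k T t (s_init G)) St"
  have a_nonneg: "?a n \<ge> 0" for n
    unfolding until_term_def by (intro sum_nonneg) (simp add: path_weight_nonneg nonneg)
  have a_le: "(\<Sum>j<n. ?a j) \<le> 1" for n
    unfolding until_term_path_weight
    by (rule sum_event_path_weight_le_1[OF finite_steps[OF wf] nonneg snd_in_jstates_if_steps sum_le
          s_init_in_jstates[OF wf] \<open>St \<subseteq> T\<close>])
  show "summable ?a"
    by (rule summableI_nonneg_bounded[OF a_nonneg a_le])
  then show "0 \<le> until_prob G (path_weight k T t (s_init G)) St"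
    and "until_prob G (path_weight k T t (s_init G)) St \<le> 1"
    unfolding until_prob_eq_suminf by (auto intro: suminf_nonneg a_nonneg suminf_le_const a_le)
qed

lemma until_term_fpath_summable:
  assumes wf: "cmg_wf G" and pa: "pos_act_policy G pa" and "St \<subseteq> T"
  shows "summable (until_term G (fpath G pa T (s_init G)) St)"
    and "until_prob G (fpath G pa T (s_init G)) St \<le> 1"
  unfolding fpath_eq_path_weight[of _ _ _ _ 1]
  using sum_full_kernel_eq_1[OF wf pa] \<open>St \<subseteq> T\<close>
  by (auto intro!: until_term_path_weight_summable[OF wf full_kernel_nonneg])

lemma until_term_rpath_summable:
  assumes wf: "cmg_wf G" and "St \<subseteq> T"
  shows "summable (until_term G (rpath G pc q T 1 (s_init G)) St)"
    and "0 \<le> until_prob G (rpath G pc q T 1 (s_init G)) St"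
  unfolding rpath_eq_path_weight
  using sum_restr_kernel_le_1[OF wf] \<open>St \<subseteq> T\<close>
  by (auto intro!: until_term_path_weight_summable[OF wf restr_kernel_nonneg])

lemma until_term_partial_diff_le:
  fixes G :: "('i, 'o, 'l, 'a) cmg"
  assumes wf: "cmg_wf G" and pc: "pos_comm_policy G pc" and pa: "pos_act_policy G pa"
    and adm: "q_admissible G pa T q" and "St \<subseteq> T"
  shows "(\<Sum>k<Suc n. until_term G (fpath G pa T (s_init G)) St k)
       - (\<Sum>k<Suc n. until_term G (rpath G pc q T 1 (s_init G)) St k)
       \<le> sqrt (1 - exp (- (\<Sum>k<n. step_cost G pc pa T (Suc k))))"
proof -
  have "expected_cost (full_kernel G pa) (log_ratio G pa pc q) T (steps G) n 1 (s_init G)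
      = (\<Sum>k<n. step_cost G pc pa T (Suc k))"
    unfolding expected_cost_eq_sum[OF finite_steps[OF wf]]
    by (intro sum.cong refl expected_log_ratio_eq_step_cost[OF wf adm])
  moreover have "(\<Sum>k<Suc n. until_term G (fpath G pa T (s_init G)) St k)
      - (\<Sum>k<Suc n. until_term G (rpath G pc q T 1 (s_init G)) St k)
      \<le> sqrt (1 - exp (- expected_cost (full_kernel G pa) (log_ratio G pa pc q) T (steps G) n 1 (s_init G)))"
    unfolding fpath_eq_path_weight[of _ _ _ _ 1] rpath_eq_path_weight until_term_path_weight
  proof (rule reach_diff_le_expected_cost[where S = "jstates G" and good = "pos_reachable G pa T"])
    show "\<And>t s x. pos_reachable G pa T t s \<Longrightarrow> s \<notin> T \<Longrightarrow> x \<in> steps G \<Longrightarrow> full_kernel G pa t s x > 0 \<Longrightarrow>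
        (snd x \<in> T \<or> pos_reachable G pa T (Suc t) (snd x)) \<and>
        full_kernel G pa t s x * exp (- log_ratio G pa pc q t s x) \<le> restr_kernel G pc q t s x"
      using pos_reachable_step full_kernel_mult_exp_neg_log_ratio_le[OF wf adm pc] by blast
    show "s_init G \<in> T \<or> pos_reachable G pa T 1 (s_init G)"
      using pos_reachable_init by blast
  qed (use finite_steps[OF wf] full_kernel_nonneg restr_kernel_nonneg snd_in_jstates_if_steps
      sum_full_kernel_eq_1[OF wf pa] sum_restr_kernel_le_1[OF wf] pos_reachable_in_jstates[OF wf]
      s_init_in_jstates[OF wf] pos_reachable_init \<open>St \<subseteq> T\<close> in auto)
  ultimately show ?thesis
    by simp
qed

lemma sum_suminf_ennreal_not_top:
  fixes f :: "'i \<Rightarrow> nat \<Rightarrow> real"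
  assumes "finite I" and nonneg: "\<And>i t. i \<in> I \<Longrightarrow> f i t \<ge> 0" and "(\<Sum>i\<in>I. \<Sum>t. ennreal (f i t)) \<noteq> top"
  shows "\<forall>i\<in>I. summable (f i)" and "(\<Sum>i\<in>I. \<Sum>t. ennreal (f i t)) = ennreal (\<Sum>i\<in>I. \<Sum>t. f i t)"
proof -
  show summable: "\<forall>i\<in>I. summable (f i)"
    using assms by (auto intro: summable_suminf_not_top)
  have "(\<Sum>i\<in>I. \<Sum>t. ennreal (f i t)) = (\<Sum>i\<in>I. ennreal (\<Sum>t. f i t))"
    using summable nonneg by (intro sum.cong refl suminf_ennreal2) auto
  also have "\<dots> = ennreal (\<Sum>i\<in>I. \<Sum>t. f i t)"
    using summable nonneg by (intro sum_ennreal suminf_nonneg) auto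
  finally show "(\<Sum>i\<in>I. \<Sum>t. ennreal (f i t)) = ennreal (\<Sum>i\<in>I. \<Sum>t. f i t)" .
qed

lemma step_cost_sums_Dcost:
  assumes wf: "cmg_wf G" and adm: "q_admissible G pa T q"
    and H: "summable (\<lambda>t. Hent G pa T (Suc t))" and D: "Dcost G pc pa T \<noteq> \<infinity>"
  shows "(\<lambda>t. step_cost G pc pa T (Suc t)) sums real_of_ereal (Dcost G pc pa T)"
proof -
  let ?GI = "\<lambda>i t. Gi_term G pc pa T i (Suc t)" and ?GC = "\<lambda>c t. Gc_term G pc pa T c (Suc t)"
  have fin: "finite (agents G)" "finite (comm_acts G)"
    using wf finite_comm_acts by (auto simp: cmg_wf_def)
  have not_top: "(\<Sum>i\<in>agents G. \<Sum>t. ennreal (?GI i t)) \<noteq> top" "(\<Sum>c\<in>comm_acts G. \<Sum>t. ennreal (?GC c t)) \<noteq> top"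
    using D by (auto simp: Dcost_def Gi_def Gc_def)
  note GI = sum_suminf_ennreal_not_top[OF fin(1) Gi_term_nonneg[OF adm] not_top(1)]
  note GC = sum_suminf_ennreal_not_top[OF fin(2) Gc_term_nonneg[OF adm] not_top(2)]
  define XI where "XI = (\<Sum>i\<in>agents G. \<Sum>t. ?GI i t)"
  define XC where "XC = (\<Sum>c\<in>comm_acts G. \<Sum>t. ?GC c t)"
  have "XI \<ge> 0" "XC \<ge> 0"
    unfolding XI_def XC_def using GI(1) GC(1) Gi_term_nonneg[OF adm] Gc_term_nonneg[OF adm]
    by (auto intro!: sum_nonneg suminf_nonneg)
  moreover have "(\<Sum>i\<in>agents G. Gi G pc pa T i) = ennreal XI" "(\<Sum>c\<in>comm_acts G. Gc G pc pa T c) = ennreal XC"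
    unfolding Gi_def Gc_def XI_def XC_def using GI(2) GC(2) by simp_all
  ultimately have "Dcost G pc pa T = enn2ereal (ennreal (XI + XC)) - ereal (\<Sum>t. Hent G pa T (Suc t))"
    unfolding Dcost_def by (simp only: ennreal_plus)
  also have "\<dots> = ereal (XI + XC - (\<Sum>t. Hent G pa T (Suc t)))"
    using \<open>XI \<ge> 0\<close> \<open>XC \<ge> 0\<close> by (subst enn2ereal_ennreal) auto
  finally have "Dcost G pc pa T = ereal (XI + XC - (\<Sum>t. Hent G pa T (Suc t)))" .
  moreover have "(\<lambda>t. step_cost G pc pa T (Suc t)) sums (XI + XC - (\<Sum>t. Hent G pa T (Suc t)))"
    unfolding step_cost_def XI_def XC_def using GI(1) GC(1)
    by (intro sums_diff sums_add sums_sum summable_sums H) auto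
  ultimately show ?thesis
    by simp
qed

lemma suminf_diff_le_sqrt_one_minus_exp:
  fixes a b c :: "nat \<Rightarrow> real"
  assumes "summable a" "summable b" "c sums C"
    and partial: "\<And>n. (\<Sum>k<Suc n. a k) - (\<Sum>k<Suc n. b k) \<le> sqrt (1 - exp (- (\<Sum>k<n. c k)))"
  shows "suminf a - suminf b \<le> sqrt (1 - exp (- C))"
proof (rule LIMSEQ_le)
  show "(\<lambda>n. (\<Sum>k<Suc n. a k) - (\<Sum>k<Suc n. b k)) \<longlonglongrightarrow> suminf a - suminf b"
    using assms(1,2) by (intro tendsto_diff LIMSEQ_Suc summable_LIMSEQ)
  show "(\<lambda>n. sqrt (1 - exp (- (\<Sum>k<n. c k)))) \<longlonglongrightarrow> sqrt (1 - exp (- C))"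
    using assms(3) by (intro tendsto_intros) (simp add: sums_def)
qed (use partial in auto)

theorem theorem1:
  fixes G :: "('i, 'o, 'l, 'a) cmg"
    and pc :: "('i \<Rightarrow> 'o) \<Rightarrow> 'i set pmf"
    and pa :: "('i, 'o, 'l) jstate \<Rightarrow> ('i \<Rightarrow> 'a) pmf"
    and St Sa :: "('i, 'o, 'l) jstate set"
    and q :: "nat \<Rightarrow> 'i set \<Rightarrow> ('i \<Rightarrow> 'o) \<Rightarrow> ('i \<Rightarrow> 'l) \<Rightarrow> (('i \<Rightarrow> 'a) \<times> ('i \<Rightarrow> 'o) \<times> ('i \<Rightarrow> 'l)) pmf"
  assumes "cmg_wf G"
    and "reach_avoid_obj G St Sa"
    and "pos_comm_policy G pc"
    and "pos_act_policy G pa"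
    and "q_admissible G pa (St \<union> Sa) q"
    and "summable (\<lambda>t. Hent G pa (St \<union> Sa) (Suc t))"
  shows "until_prob G (fpath G pa (St \<union> Sa) (s_init G)) St
         - until_prob G (rpath G pc q (St \<union> Sa) 1 (s_init G)) St
         \<le> (if Dcost G pc pa (St \<union> Sa) = \<infinity> then 1
            else sqrt (1 - exp (- real_of_ereal (Dcost G pc pa (St \<union> Sa)))))"
proof -
  note wf = assms(1) and pc = assms(3) and pa = assms(4)
  define T where "T = St \<union> Sa"
  have adm: "q_admissible G pa T q" and H: "summable (\<lambda>t. Hent G pa T (Suc t))" and "St \<subseteq> T"
    using assms(5,6) by (simp_all add: T_def)
  note a = until_term_fpath_summable[OF wf pa \<open>St \<subseteq> T\<close>]
  note b = until_term_rpath_summable[OF wf \<open>St \<subseteq> T\<close>, of pc q]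
  show ?thesis
  proof (cases "Dcost G pc pa T = \<infinity>")
    case True
    then show ?thesis
      using a(2) b(2) by (simp add: T_def)
  next
    case False
    then show ?thesis
      using suminf_diff_le_sqrt_one_minus_exp[OF a(1) b(1) step_cost_sums_Dcost[OF wf adm H False]
          until_term_partial_diff_le[OF wf pc pa adm \<open>St \<subseteq> T\<close>]]
      by (simp add: T_def until_prob_eq_suminf)
  qed
qed

end
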